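(* Assume (A2), (A3), (B1) and (B2). Then any measurable choice $x^\star(b_n)$ of an optimal solution of $(\mathrm{P}_{b_n})$ satisfies $$r_n\big(x^\star(b_n)-x^\star(b)\big)\xrightarrow{D}\sum_{k=1}^K\mathbb{1}\Big\{G\in H_k\setminus\bigcup_{j<k}H_j\Big\}\,x(I_k,G)\in\mathbb{R}^d,$$ with $H_k\subseteq\mathbb{R}^m$ the closed convex cones defined below (no joint convergence assumption on any weights is needed). If moreover $G$ is absolutely continuous, the indicators may be replaced by $\mathbb{1}\{G\in H_k\}$.
   Context: Setting: $A\in\mathbb{R}^{m\times d}$ of full rank $m\le d$, $b\in\mathbb{R}^m$, $c\in\mathbb{R}^d$. $(\mathrm{P}_\beta)$: $\min c^Tx$ s.t. $Ax=\beta,x\ge0$; $(\mathrm{D}_\beta)$: $\max\beta^T\lambda$ s.t. $A^T\lambda\le c$. A basis is $I\subseteq[d]$ with $|I|=m$, $A_I$ invertible; $x(I,v)\in\mathbb{R}^d$ has coordinates $(A_I)^{-1}v$ on $I$ and $0$ elsewhere; $\lambda(I)=(A_I)^{-T}c_I$; $I$ is dual feasible if $A^T\lambda(I)\le c$. Let $I_1,\dots,I_N$ enumerate all dual feasible bases with $I_1,\dots,I_K$ exactly those with $x(I_k,b)\ge0$. (A2): $(\mathrm{P}_b)$ has a unique optimal solution $x^\star(b)$. (A3): $\lambda(I_j)\ne\lambda(I_k)$ for $1\le j<k\le K$. Stochastic: $r_n\to\infty$, $m_0\in[m]$, random $b_n\in\mathbb{R}^m$ whose last $m-m_0$ coordinates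 equal those of $b$. (B1): $G_n:=r_n(b_n-b)\xrightarrow{D}G=(G^{m_0},0_{m-m_0})$ with $G^{m_0}$ absolutely continuous on $\mathbb{R}^{m_0}$. (B2): $\mathbb{P}((\mathrm{P}_{b_n})\text{ has an optimal solution})\to1$. Cones: $\mathrm{Pos}=\{i:x^\star_i(b)>0\}$; for $k\le K$ write $I_k=\{i^k_1<\dots<i^k_m\}$, $J_k=\{j\in[m]:i^k_j\notin\mathrm{Pos}\}$, and $H_k=\{v\in\mathbb{R}^m:[(A_{I_k})^{-1}v]_j\ge0\ \forall j\in J_k\}$. *)

theory Defs
  imports "HOL-Probability.Probability"
begin

definition supp_in :: "'d set \<Rightarrow> real^'d \<Rightarrow> bool" where
  "supp_in I x \<longleftrightarrow> (\<forall>i. i \<notin> I \<longrightarrow> x $ i = 0)"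

definition is_basis :: "real^'d^'m \<Rightarrow> 'd set \<Rightarrow> bool" where
  "is_basis A I \<longleftrightarrow> card I = CARD('m) \<and> (\<forall>x. supp_in I x \<and> A *v x = 0 \<longrightarrow> x = 0)"

text \<open>x(I,v): coordinates (A_I)^{-1} v on I and 0 elsewhere.\<close>
definition basic_sol :: "real^'d^'m \<Rightarrow> 'd set \<Rightarrow> real^'m \<Rightarrow> real^'d" where
  "basic_sol A I v = (THE x. supp_in I x \<and> A *v x = v)"

text \<open>lambda(I) = (A_I)^{-T} c_I, i.e. the unique lambda with (A^T lambda)_i = c_i for i in I.\<close>
definition dual_sol :: "real^'d^'m \<Rightarrow> real^'d \<Rightarrow> 'd set \<Rightarrow> real^'m" where
  "dual_sol A c I = (THE l. \<forall>i\<in>I. (transpose A *v l) $ i = c $ i)"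

definition dual_feasible_basis :: "real^'d^'m \<Rightarrow> real^'d \<Rightarrow> 'd set \<Rightarrow> bool" where
  "dual_feasible_basis A c I \<longleftrightarrow> is_basis A I \<and> (\<forall>i. (transpose A *v dual_sol A c I) $ i \<le> c $ i)"

definition lp_optimal :: "real^'d^'m \<Rightarrow> real^'d \<Rightarrow> real^'m \<Rightarrow> real^'d \<Rightarrow> bool" where
  "lp_optimal A c beta x \<longleftrightarrow> (\<forall>i. 0 \<le> x $ i) \<and> A *v x = beta \<and>
     (\<forall>y. (\<forall>i. 0 \<le> y $ i) \<and> A *v y = beta \<longrightarrow> c \<bullet> x \<le> c \<bullet> y)"

text \<open>x*(beta), meaningful when the optimal solution is unique (A2).\<close>
definition lp_xstar :: "real^'d^'m \<Rightarrow> real^'d \<Rightarrow> real^'m \<Rightarrow> real^'d" where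
  "lp_xstar A c beta = (THE x. lp_optimal A c beta x)"

definition Pos :: "real^'d^'m \<Rightarrow> real^'d \<Rightarrow> real^'m \<Rightarrow> 'd set" where
  "Pos A c b = {i. 0 < lp_xstar A c b $ i}"

text \<open>H_k = {v. [(A_{I_k})^{-1} v]_j >= 0 for all j in J_k}; since the j-th coordinate of
  (A_I)^{-1} v is the i_j-th coordinate of x(I,v), this is the set of v with
  x(I,v)_i >= 0 for all i in I \ Pos.\<close>
definition Hcone :: "real^'d^'m \<Rightarrow> real^'d \<Rightarrow> real^'m \<Rightarrow> 'd set \<Rightarrow> (real^'m) set" where
  "Hcone A c b I = {v. \<forall>i\<in>I - Pos A c b. 0 \<le> basic_sol A I v $ i}"

text \<open>Limit map: sum_k 1{v in H_k \ U_{j<k} H_j} x(I_k, v) (list Is is 0-indexed).\<close>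
definition limit_map :: "real^'d^'m \<Rightarrow> real^'d \<Rightarrow> real^'m \<Rightarrow> 'd set list \<Rightarrow> real^'m \<Rightarrow> real^'d" where
  "limit_map A c b Is v = (\<Sum>k<length Is.
      indicator (Hcone A c b (Is ! k) - (\<Union>j<k. Hcone A c b (Is ! j))) v *\<^sub>R basic_sol A (Is ! k) v)"

definition limit_map_simple :: "real^'d^'m \<Rightarrow> real^'d \<Rightarrow> real^'m \<Rightarrow> 'd set list \<Rightarrow> real^'m \<Rightarrow> real^'d" where
  "limit_map_simple A c b Is v = (\<Sum>k<length Is.
      indicator (Hcone A c b (Is ! k)) v *\<^sub>R basic_sol A (Is ! k) v)"

definition conv_distr :: "(nat \<Rightarrow> 'a::real_normed_vector measure) \<Rightarrow> 'a measure \<Rightarrow> bool" where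
  "conv_distr \<mu>s \<mu> \<longleftrightarrow> (\<forall>f :: 'a \<Rightarrow> real. continuous_on UNIV f \<and> bounded (range f) \<longrightarrow>
      (\<lambda>n. integral\<^sup>L (\<mu>s n) f) \<longlonglongrightarrow> integral\<^sup>L \<mu> f)"

definition first_coords :: "nat \<Rightarrow> ('m::{finite,linorder}) set" where
  "first_coords m0 = {i. card {j. j < i} < m0}"

end

theory Submission
  imports Defs
begin

text \<open>
  For small perturbations \<open>w\<close>, every optimal solution for the right-hand side \<open>b + w\<close> is the
  basic solution of a dual feasible basis that is primal feasible for \<open>b + w\<close>; by continuity this
  basis is one of the \<open>I\<^sub>k\<close>, so the solution is \<open>x\<^sup>\<star>(b) + x(I\<^sub>k, w)\<close> with \<open>w \<in> H\<^sub>k\<close>. Uniqueness of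
  the optimum, which together with (A3) forces every dual-tight index of \<open>\<lambda>(I\<^sub>k)\<close> into \<open>I\<^sub>k\<close>, makes
  \<open>x(I\<^sub>j, \<cdot>)\<close> and \<open>x(I\<^sub>k, \<cdot>)\<close> agree on \<open>H\<^sub>j \<inter> H\<^sub>k\<close>. Hence the limit map is continuous on the
  closed union of the cones, and \<open>r\<^sub>n (x\<^sup>\<star>(b\<^sub>n) - x\<^sup>\<star>(b))\<close> is the limit map applied to \<open>G\<^sub>n\<close> on
  events of probability tending to one; the continuous mapping theorem, applied to a continuous
  extension off the cones, gives the first claim. Distinct cones overlap only inside the hyperplanes
  \<open>(\<lambda>(I\<^sub>j) - \<lambda>(I\<^sub>k)) \<bullet> v = 0\<close>, which are null for an absolutely continuous \<open>G\<close>.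
\<close>

section \<open>Basic and dual solutions\<close>

lemma matrix_vector_mult_column_sum:
  "(A::real^'d^'m) *v x = (\<Sum>i\<in>UNIV. x$i *\<^sub>R column i A)"
  by (simp add: matrix_mult_sum scalar_mult_eq_scaleR)

lemma transpose_mult_vec_nth: "(transpose (A::real^'d^'m) *v l) $ i = column i A \<bullet> l"
  by (simp add: matrix_vector_mult_def transpose_def column_def inner_vec_def mult.commute)

lemma inner_matrix_vector_mult:
  "l \<bullet> ((A::real^'d^'m) *v x) = (\<Sum>i\<in>UNIV. x$i * (column i A \<bullet> l))"
  by (simp add: matrix_vector_mult_column_sum inner_sum_right inner_commute)

lemma matrix_vector_mult_supp_in:
  fixes A :: "real^'d^'m"
  assumes "supp_in J z"
  shows "A *v z = (\<Sum>i\<in>J. z$i *\<^sub>R column i A)"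
  unfolding matrix_vector_mult_column_sum
  using assms by (intro sum.mono_neutral_right) (auto simp: supp_in_def)

lemma subspace_supp_in: "subspace (Collect (supp_in J))"
  by (auto simp: subspace_def supp_in_def)

lemma dim_supp_in: "dim (Collect (supp_in (J::'d::finite set))) = card J"
proof -
  have "Collect (supp_in J) = {x::real^'d. \<forall>i. i \<notin> J \<longrightarrow> x $ i = 0}"
    by (auto simp: supp_in_def)
  moreover have "vec.dim {x::real^'d. \<forall>i. i \<notin> J \<longrightarrow> x $ i = 0} = card J"
    by (rule dim_substandard_cart)
  ultimately show ?thesis by (simp add: dim_vec_eq)
qed

definition col_independent :: "real^'d^'m \<Rightarrow> 'd set \<Rightarrow> bool" where
  "col_independent A J \<longleftrightarrow> (\<forall>z. supp_in J z \<and> A *v z = 0 \<longrightarrow> z = 0)"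

lemma col_independent_inj_on:
  assumes "col_independent A J"
  shows "inj_on ((*v) A) (Collect (supp_in J))"
proof (rule inj_onI)
  fix x y assume xy: "x \<in> Collect (supp_in J)" "y \<in> Collect (supp_in J)" "A *v x = A *v y"
  then have "supp_in J (x - y)" "A *v (x - y) = 0"
    by (auto simp: supp_in_def matrix_vector_mult_diff_distrib)
  then show "x = y" using assms by (auto simp: col_independent_def)
qed

lemma col_independent_card_eq_imp_surj:
  fixes A :: "real^'d^'m"
  assumes "col_independent A J" "card J = CARD('m)"
  shows "(*v) A ` Collect (supp_in J) = UNIV"
proof -
  have lin: "linear ((*v) A)" by (simp add: matrix_vector_mul_linear)
  have "dim ((*v) A ` Collect (supp_in J)) = dim (Collect (supp_in J))"
    using eucl.dim_image_eq[OF lin, of "Collect (supp_in J)"] col_independent_inj_on[OF assms(1)]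
    by (simp add: span_eq_iff[THEN iffD2, OF subspace_supp_in])
  then have "dim ((*v) A ` Collect (supp_in J)) = DIM(real^'m)"
    using assms(2) by (simp add: dim_supp_in)
  then have "span ((*v) A ` Collect (supp_in J)) = UNIV" by (simp only: eucl.dim_eq_full)
  then show ?thesis
    by (metis span_eq_iff linear_subspace_image[OF lin subspace_supp_in])
qed

lemma is_basis_iff: "is_basis A I \<longleftrightarrow> card I = CARD('m) \<and> col_independent A I"
  for A :: "real^'d^'m"
  by (simp add: is_basis_def col_independent_def)

lemma basic_sol_ex1:
  fixes A :: "real^'d^'m"
  assumes "is_basis A I"
  shows "\<exists>!x. supp_in I x \<and> A *v x = v"
proof -
  have ind: "col_independent A I" and card: "card I = CARD('m)" using assms by (auto simp: is_basis_iff)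
  obtain x where x: "supp_in I x" "A *v x = v"
    using col_independent_card_eq_imp_surj[OF ind card] by (metis UNIV_I imageE mem_Collect_eq)
  moreover have "y = x" if "supp_in I y" "A *v y = v" for y
    using inj_onD[OF col_independent_inj_on[OF ind], of y x] that x by simp
  ultimately show ?thesis by blast
qed

lemma basic_sol:
  fixes A :: "real^'d^'m"
  assumes "is_basis A I"
  shows "supp_in I (basic_sol A I v)" "A *v basic_sol A I v = v"
  using theI'[OF basic_sol_ex1[OF assms, of v]] by (auto simp: basic_sol_def)

lemma basic_sol_unique:
  fixes A :: "real^'d^'m"
  assumes "is_basis A I" "supp_in I x" "A *v x = v"
  shows "basic_sol A I v = x"
  using basic_sol_ex1[OF assms(1), of v] basic_sol[OF assms(1), of v] assms by blast

lemma linear_basic_sol: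
  fixes A :: "real^'d^'m"
  assumes "is_basis A I"
  shows "linear (basic_sol A I)"
proof (rule linearI)
  show "basic_sol A I (u + v) = basic_sol A I u + basic_sol A I v" for u v
    using basic_sol[OF assms] by (intro basic_sol_unique[OF assms])
      (auto simp: supp_in_def matrix_vector_right_distrib)
  show "basic_sol A I (r *\<^sub>R u) = r *\<^sub>R basic_sol A I u" for r u
    using basic_sol[OF assms] by (intro basic_sol_unique[OF assms])
      (auto simp: supp_in_def matrix_vector_mult_scaleR)
qed

lemma basic_sol_add:
  "is_basis A I \<Longrightarrow> basic_sol A I (u + v) = basic_sol A I u + basic_sol A I v"
  using linear_basic_sol linear_add by blast

lemma basic_sol_scaleR:
  "is_basis A I \<Longrightarrow> basic_sol A I (r *\<^sub>R u) = r *\<^sub>R basic_sol A I u"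
  using linear_basic_sol linear_scale by blast

lemma continuous_on_basic_sol: "is_basis A I \<Longrightarrow> continuous_on S (basic_sol A I)"
  by (intro linear_continuous_on linear_conv_bounded_linear[THEN iffD1] linear_basic_sol)

lemma basic_sol_column:
  fixes A :: "real^'d^'m"
  assumes "is_basis A I" "i \<in> I"
  shows "basic_sol A I (column i A) = axis i 1"
  using assms by (intro basic_sol_unique) (auto simp: supp_in_def axis_def matrix_vector_mult_basis[symmetric])

lemma inner_basic_sol_eq:
  fixes A :: "real^'d^'m"
  assumes "is_basis A I" "\<forall>i\<in>I. column i A \<bullet> l = c$i"
  shows "c \<bullet> basic_sol A I v = l \<bullet> v"
proof -
  let ?x = "basic_sol A I v"
  have "l \<bullet> v = (\<Sum>i\<in>UNIV. ?x$i * (column i A \<bullet> l))"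
    using basic_sol[OF assms(1)] inner_matrix_vector_mult by metis
  also have "\<dots> = (\<Sum>i\<in>UNIV. c$i * ?x$i)"
    using basic_sol(1)[OF assms(1), of v] assms(2) by (intro sum.cong) (auto simp: supp_in_def)
  also have "\<dots> = c \<bullet> ?x" by (simp add: inner_vec_def)
  finally show ?thesis by simp
qed

lemma dual_sol_ex1:
  fixes A :: "real^'d^'m"
  assumes "is_basis A I"
  shows "\<exists>!l. \<forall>i\<in>I. column i A \<bullet> l = c$i"
proof -
  define l :: "real^'m" where "l = (\<chi> k. c \<bullet> basic_sol A I (axis k 1))"
  have "l \<bullet> v = c \<bullet> basic_sol A I v" for v
  proof -
    have "c \<bullet> basic_sol A I v = c \<bullet> basic_sol A I (\<Sum>k\<in>UNIV. v$k *\<^sub>R axis k 1)"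
      by (metis basis_expansion scalar_mult_eq_scaleR)
    also have "\<dots> = (\<Sum>k\<in>UNIV. v$k * (c \<bullet> basic_sol A I (axis k 1)))"
      using linear_basic_sol[OF assms]
      by (simp add: linear_sum linear_scale inner_sum_right)
    finally show ?thesis by (simp add: l_def inner_vec_def mult.commute)
  qed
  then have l: "\<forall>i\<in>I. column i A \<bullet> l = c$i"
    by (simp add: inner_commute[of _ l] basic_sol_column[OF assms] inner_axis)
  have "l' = l" if "\<forall>i\<in>I. column i A \<bullet> l' = c$i" for l'
    using inner_basic_sol_eq[OF assms that] inner_basic_sol_eq[OF assms l]
    by (metis vector_eq_rdot)
  then show ?thesis using l by blast
qed

lemma dual_sol:
  fixes A :: "real^'d^'m"
  assumes "is_basis A I"
  shows "\<forall>i\<in>I. column i A \<bullet> dual_sol A c I = c$i"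
  using theI'[OF dual_sol_ex1[OF assms, of c]] unfolding dual_sol_def transpose_mult_vec_nth .

lemma dual_sol_unique:
  fixes A :: "real^'d^'m"
  assumes "is_basis A I" "\<forall>i\<in>I. column i A \<bullet> l = c$i"
  shows "dual_sol A c I = l"
  using dual_sol_ex1[OF assms(1), of c] dual_sol[OF assms(1), of c] assms(2) by blast

lemma inner_basic_sol_dual_sol:
  "is_basis A I \<Longrightarrow> c \<bullet> basic_sol A I v = dual_sol A c I \<bullet> v"
  by (rule inner_basic_sol_eq[OF _ dual_sol])

lemma dual_feasible_basis_iff:
  "dual_feasible_basis A c I \<longleftrightarrow> is_basis A I \<and> (\<forall>i. column i A \<bullet> dual_sol A c I \<le> c$i)"
  unfolding dual_feasible_basis_def transpose_mult_vec_nth ..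

section \<open>Optimal bases\<close>

lemma matrix_vector_mult_uminus: "(A::real^'d^'m) *v (- u) = - (A *v u)"
  by (metis matrix_vector_mult_diff_distrib diff_0 matrix_vector_mult_0_right)

lemma ex_pos_step_nonneg:
  fixes x w :: "real^'n"
  assumes "\<forall>i. 0 \<le> x$i" "\<forall>i. x$i = 0 \<longrightarrow> 0 \<le> w$i"
  shows "\<exists>e>0. \<forall>t. 0 \<le> t \<and> t \<le> e \<longrightarrow> (\<forall>i. 0 \<le> (x + t *\<^sub>R w)$i)"
proof -
  define P where "P = {i. x$i \<noteq> 0}"
  define e where "e = Min (insert 1 ((\<lambda>i. x$i / (\<bar>w$i\<bar> + 1)) ` P))"
  have xpos: "0 < x$i" if "i \<in> P" for i using assms(1) that by (auto simp: P_def less_le)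
  have "e > 0" unfolding e_def using xpos by (subst Min_gr_iff) auto
  moreover have "0 \<le> (x + t *\<^sub>R w)$i" if t: "0 \<le> t" "t \<le> e" for t i
  proof (cases "i \<in> P")
    case True
    have "e \<le> x$i / (\<bar>w$i\<bar> + 1)" unfolding e_def using True by (intro Min_le) auto
    then have "e * (\<bar>w$i\<bar> + 1) \<le> x$i" by (simp add: pos_le_divide_eq add_pos_nonneg)
    moreover have "t * \<bar>w$i\<bar> \<le> e * (\<bar>w$i\<bar> + 1)"
      using t \<open>e > 0\<close> by (intro mult_mono) auto
    moreover have "t * - \<bar>w$i\<bar> \<le> t * w$i" using t(1) by (intro mult_left_mono) auto
    ultimately show ?thesis by simp
  next
    case False then show ?thesis using assms t by (simp add: P_def)
  qed
  ultimately show ?thesis by blast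
qed

lemma ex_ratio_step:
  fixes y u :: "real^'n"
  assumes "\<forall>i. 0 \<le> y$i" "u$j < 0"
  shows "\<exists>s\<ge>0. \<exists>i0. u$i0 < 0 \<and> (y + s *\<^sub>R u)$i0 = 0 \<and> (\<forall>i. 0 \<le> (y + s *\<^sub>R u)$i)"
proof -
  define N where "N = {i. u$i < 0}"
  define s where "s = Min ((\<lambda>i. y$i / - u$i) ` N)"
  have N: "finite N" "N \<noteq> {}" using assms(2) by (auto simp: N_def)
  have "s \<in> (\<lambda>i. y$i / - u$i) ` N" unfolding s_def using N by (intro Min_in) auto
  then obtain i0 where i0: "i0 \<in> N" "s = y$i0 / - u$i0" by blast
  have "0 \<le> s" using i0 assms(1) by (simp add: N_def divide_nonneg_neg)
  moreover have "0 \<le> (y + s *\<^sub>R u)$i" for i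
  proof (cases "i \<in> N")
    case True
    then have "s \<le> y$i / - u$i" unfolding s_def using N by (intro Min_le) auto
    then have "s * - u$i \<le> y$i" using True pos_le_divide_eq[of "- u$i" s "y$i"] by (simp add: N_def)
    then show ?thesis by simp
  next
    case False then show ?thesis using assms(1) \<open>0 \<le> s\<close> by (simp add: N_def)
  qed
  moreover have "(y + s *\<^sub>R u)$i0 = 0" using i0 by (simp add: N_def)
  ultimately show ?thesis using i0(1) by (auto simp: N_def)
qed

lemma lp_optimal_feasible_direction:
  fixes A :: "real^'d^'m"
  assumes opt: "lp_optimal A c \<beta> x" and "A *v w = 0" and "\<forall>i. x$i = 0 \<longrightarrow> 0 \<le> w$i"
  shows "0 \<le> c \<bullet> w"
proof -
  obtain e where e: "e > 0" "\<forall>i. 0 \<le> (x + e *\<^sub>R w)$i"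
    using ex_pos_step_nonneg[of x w] opt assms(3) by (auto simp: lp_optimal_def)
  have "A *v (x + e *\<^sub>R w) = \<beta>"
    using opt assms(2) by (simp add: lp_optimal_def matrix_vector_right_distrib matrix_vector_mult_scaleR)
  then have "c \<bullet> x \<le> c \<bullet> (x + e *\<^sub>R w)"
    using opt e(2) unfolding lp_optimal_def by blast
  then have "c \<bullet> x \<le> c \<bullet> x + e * (c \<bullet> w)" by (simp add: inner_add_right)
  then show ?thesis using e(1) by (simp add: zero_le_mult_iff)
qed

lemma lp_optimal_shrink_support:
  fixes A :: "real^'d^'m"
  assumes opt: "lp_optimal A c \<beta> y"
    and u: "supp_in {i. y$i \<noteq> 0} u" "A *v u = 0" "u \<noteq> 0"
  shows "\<exists>x. lp_optimal A c \<beta> x \<and> {i. x$i \<noteq> 0} \<subset> {i. y$i \<noteq> 0}"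
proof -
  have "0 \<le> c \<bullet> u" "0 \<le> c \<bullet> - u"
    using lp_optimal_feasible_direction[OF opt, of u] lp_optimal_feasible_direction[OF opt, of "- u"] u(1,2)
    by (auto simp: supp_in_def matrix_vector_mult_uminus)
  then have cu: "c \<bullet> u = 0" by simp
  obtain j where "u$j \<noteq> 0" using u(3) by (metis vec_eq_iff zero_index)
  define v where "v = (if u$j < 0 then u else - u)"
  have v: "v$j < 0" "supp_in {i. y$i \<noteq> 0} v" "A *v v = 0" "c \<bullet> v = 0"
    using \<open>u$j \<noteq> 0\<close> u cu by (auto simp: v_def supp_in_def matrix_vector_mult_uminus)
  obtain s i0 where s: "v$i0 < 0" "(y + s *\<^sub>R v)$i0 = 0" "\<forall>i. 0 \<le> (y + s *\<^sub>R v)$i"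
    using ex_ratio_step[of y v j] opt v(1) by (auto simp: lp_optimal_def)
  have "lp_optimal A c \<beta> (y + s *\<^sub>R v)"
    using opt s(3) v(3,4)
    by (simp add: lp_optimal_def matrix_vector_right_distrib matrix_vector_mult_scaleR inner_add_right)
  moreover have "{i. (y + s *\<^sub>R v)$i \<noteq> 0} \<subset> {i. y$i \<noteq> 0}"
    using v(2) s(1,2) by (auto simp: supp_in_def)
  ultimately show ?thesis by blast
qed

lemma lp_optimal_ex_col_independent:
  fixes A :: "real^'d^'m"
  assumes "lp_optimal A c \<beta> y"
  shows "\<exists>x. lp_optimal A c \<beta> x \<and> col_independent A {i. x$i \<noteq> 0}"
  using assms
proof (induction "card {i. y$i \<noteq> 0}" arbitrary: y rule: less_induct)
  case less
  show ?case
  proof (cases "col_independent A {i. y$i \<noteq> 0}")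
    case False
    then obtain u where "supp_in {i. y$i \<noteq> 0} u" "A *v u = 0" "u \<noteq> 0"
      by (auto simp: col_independent_def)
    then obtain x where x: "lp_optimal A c \<beta> x" "{i. x$i \<noteq> 0} \<subset> {i. y$i \<noteq> 0}"
      using lp_optimal_shrink_support[OF less.prems] by blast
    then have "card {i. x$i \<noteq> 0} < card {i. y$i \<noteq> 0}" by (intro psubset_card_mono) auto
    then show ?thesis using less.hyps x(1) by blast
  qed (use less.prems in blast)
qed

lemma convex_cone_hull_subset_nonneg_combinations:
  fixes p :: "'j \<Rightarrow> 'a::real_vector"
  assumes "finite J"
  shows "convex_cone hull (p ` J) \<subseteq> {(\<Sum>j\<in>J. u j *\<^sub>R p j) | u. \<forall>j\<in>J. 0 \<le> u j}"
    (is "_ \<subseteq> ?E")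
proof (rule hull_minimal)
  show "p ` J \<subseteq> ?E"
  proof
    fix x assume "x \<in> p ` J"
    then obtain j where j: "j \<in> J" "x = p j" by blast
    have "(\<Sum>k\<in>J. (if k = j then 1 else 0) *\<^sub>R p k) = p j"
      using j assms by (simp add: if_distrib[of "\<lambda>r. r *\<^sub>R _"] cong: if_cong)
    then show "x \<in> ?E" using j by (auto intro!: exI[of _ "\<lambda>k. if k = j then 1 else 0"])
  qed
  show "convex_cone ?E" unfolding convex_cone_iff
  proof (intro conjI ballI allI impI)
    show "0 \<in> ?E" by (auto intro!: exI[of _ "\<lambda>_. 0"])
  next
    fix x y assume "x \<in> ?E" "y \<in> ?E"
    then obtain u v where "x = (\<Sum>j\<in>J. u j *\<^sub>R p j)" "\<forall>j\<in>J. 0 \<le> u j"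
       "y = (\<Sum>j\<in>J. v j *\<^sub>R p j)" "\<forall>j\<in>J. 0 \<le> v j" by blast
    then show "x + y \<in> ?E"
      by (auto intro!: exI[of _ "\<lambda>j. u j + v j"] simp: scaleR_add_left sum.distrib)
  next
    fix x and r :: real assume "x \<in> ?E" "0 \<le> r"
    then obtain u where "x = (\<Sum>j\<in>J. u j *\<^sub>R p j)" "\<forall>j\<in>J. 0 \<le> u j" by blast
    then show "r *\<^sub>R x \<in> ?E" using \<open>0 \<le> r\<close>
      by (auto intro!: exI[of _ "\<lambda>j. r * u j"] simp: scaleR_sum_right)
  qed
qed

lemma farkas_conic:
  fixes p :: "'j \<Rightarrow> 'a::euclidean_space"
  assumes "finite J" "\<forall>a. (\<forall>j\<in>J. 0 \<le> a \<bullet> p j) \<longrightarrow> 0 \<le> a \<bullet> z"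
  shows "\<exists>u. (\<forall>j\<in>J. 0 \<le> u j) \<and> z = (\<Sum>j\<in>J. u j *\<^sub>R p j)"
proof -
  have "z \<in> convex_cone hull (p ` J)"
  proof (rule ccontr)
    assume "z \<notin> convex_cone hull (p ` J)"
    then obtain a b where ab: "a \<bullet> z < b" "\<forall>x\<in>convex_cone hull (p ` J). b < a \<bullet> x"
      using separating_hyperplane_closed_point[OF convex_convex_cone_hull closed_convex_cone_hull]
        assms(1) by blast
    have "b < 0" using ab(2) convex_cone_hull_contains_0 by fastforce
    have "0 \<le> a \<bullet> p j" if j: "j \<in> J" for j
    proof (rule ccontr)
      assume neg: "\<not> 0 \<le> a \<bullet> p j"
      \<comment> \<open>scaling \<open>p j\<close> by \<open>b / (a \<bullet> p j) \<ge> 0\<close> lands exactly on the separating hyperplane\<close>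
      have "(b / (a \<bullet> p j)) *\<^sub>R p j \<in> convex_cone hull (p ` J)"
        using j neg \<open>b < 0\<close> by (intro convex_cone_hull_mul hull_inc) (auto simp: divide_nonpos_neg)
      then show False using ab(2) neg by fastforce
    qed
    then show False using assms(2) ab(1) \<open>b < 0\<close> by force
  qed
  then show ?thesis using convex_cone_hull_subset_nonneg_combinations[OF assms(1)] by blast
qed

lemma sum_UNIV_prod_bool:
  "(\<Sum>j\<in>(UNIV::('d::finite \<times> bool) set). f j) = (\<Sum>i\<in>UNIV. f (i, True) + f (i, False))"
proof -
  have "(\<Sum>j\<in>(UNIV::('d \<times> bool) set). f j) = (\<Sum>j\<in>UNIV \<times> UNIV. f j)" by simp
  also have "\<dots> = (\<Sum>i\<in>UNIV. \<Sum>b\<in>UNIV. f (i, b))" by (rule sum.cartesian_product')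
  finally show ?thesis by (simp add: UNIV_bool add.commute)
qed

lemma ex_descent_direction:
  fixes A :: "real^'d^'m"
  assumes nol: "\<nexists>l. (\<forall>i. column i A \<bullet> l \<le> c$i) \<and> (\<forall>i\<in>T. column i A \<bullet> l = c$i)"
  shows "\<exists>w. A *v w = 0 \<and> c \<bullet> w < 0 \<and> (\<forall>i. i \<notin> T \<longrightarrow> 0 \<le> w$i)"
proof -
  define q where "q i = (column i A, c$i)" for i
  define p :: "'d \<times> bool \<Rightarrow> (real^'m) \<times> real" where
    "p j = (if snd j \<or> fst j \<notin> T then q (fst j) else - q (fst j))" for j
  have "0 \<le> as \<bullet> ((0::real^'m), (-1::real))" if H: "\<forall>j\<in>UNIV. 0 \<le> as \<bullet> p j" for as
  proof (rule ccontr)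
    obtain a s where as: "as = (a, s)" by (cases as)
    assume "\<not> ?thesis"
    then have s: "s > 0" by (simp add: as inner_Pair)
    have ge: "0 \<le> a \<bullet> column i A + s * c$i" for i
      using H[rule_format, of "(i, True)"] by (simp add: as p_def q_def inner_Pair)
    have le: "a \<bullet> column i A + s * c$i \<le> 0" if "i \<in> T" for i
      using H[rule_format, of "(i, False)"] that by (simp add: as p_def q_def inner_Pair)
    have "column i A \<bullet> ((- 1 / s) *\<^sub>R a) \<le> c$i" for i
      using ge[of i] s by (simp add: inner_commute field_simps)
    moreover have "column i A \<bullet> ((- 1 / s) *\<^sub>R a) = c$i" if "i \<in> T" for i
      using ge[of i] le[OF that] s by (simp add: inner_commute field_simps)
    ultimately show False using nol by blast
  qed
  then have "\<forall>as. (\<forall>j\<in>UNIV. 0 \<le> as \<bullet> p j) \<longrightarrow> 0 \<le> as \<bullet> ((0::real^'m), (-1::real))" by blast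
  from farkas_conic[OF finite_class.finite_UNIV this] obtain u
    where u: "\<forall>j\<in>UNIV. 0 \<le> u j" "((0::real^'m), (-1::real)) = (\<Sum>j\<in>UNIV. u j *\<^sub>R p j)"
    by blast
  define w :: "real^'d" where "w = (\<chi> i. u (i, True) + (if i \<notin> T then u (i, False) else - u (i, False)))"
  have "(\<Sum>j\<in>UNIV. u j *\<^sub>R p j) = (\<Sum>i\<in>UNIV. w$i *\<^sub>R q i)"
    unfolding sum_UNIV_prod_bool
    by (intro sum.cong) (auto simp: p_def w_def scaleR_add_left)
  then have "(\<Sum>i\<in>UNIV. w$i *\<^sub>R column i A) = 0" "(\<Sum>i\<in>UNIV. w$i * c$i) = -1"
    using u(2) by (auto simp: q_def fst_sum snd_sum dest: arg_cong[where f=fst] arg_cong[where f=snd])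
  then have "A *v w = 0" "c \<bullet> w = -1"
    by (simp_all add: matrix_vector_mult_column_sum inner_vec_def mult.commute)
  moreover have "0 \<le> w$i" if "i \<notin> T" for i using that u(1) by (simp add: w_def)
  ultimately show ?thesis by (intro exI[of _ w]) auto
qed

lemma lp_optimal_dual_certificate:
  fixes A :: "real^'d^'m"
  assumes "lp_optimal A c \<beta> x"
  shows "\<exists>l. (\<forall>i. column i A \<bullet> l \<le> c$i) \<and> (\<forall>i. x$i \<noteq> 0 \<longrightarrow> column i A \<bullet> l = c$i)"
proof (rule ccontr)
  assume "\<not> ?thesis"
  then obtain w where "A *v w = 0" "c \<bullet> w < 0" "\<forall>i. x$i = 0 \<longrightarrow> 0 \<le> w$i"
    using ex_descent_direction[of A c "{i. x$i \<noteq> 0}"] by auto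
  then show False using lp_optimal_feasible_direction[OF assms] by force
qed

definition active_set :: "real^'d^'m \<Rightarrow> real^'d \<Rightarrow> real^'m \<Rightarrow> 'd set" where
  "active_set A c l = {i. column i A \<bullet> l = c$i}"

lemma surj_columns_orthogonal_imp_zero:
  fixes A :: "real^'d^'m"
  assumes "surj ((*v) A)" "\<forall>i. column i A \<bullet> v = 0"
  shows "v = 0"
proof -
  obtain x where "A *v x = v" using assms(1) by (metis surjD)
  then have "v \<bullet> v = 0" using inner_matrix_vector_mult[of v A x] assms(2) by simp
  then show ?thesis by simp
qed

lemma dual_feasible_extend_active:
  fixes A :: "real^'d^'m"
  assumes surj: "surj ((*v) A)" and feas: "\<forall>i. column i A \<bullet> l \<le> c$i"
    and not_spanning: "span ((\<lambda>i. column i A) ` active_set A c l) \<noteq> UNIV"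
  shows "\<exists>l'. (\<forall>i. column i A \<bullet> l' \<le> c$i) \<and> active_set A c l \<subseteq> active_set A c l'
           \<and> dim ((\<lambda>i. column i A) ` active_set A c l) < dim ((\<lambda>i. column i A) ` active_set A c l')"
proof -
  let ?W = "\<lambda>l. (\<lambda>i. column i A) ` active_set A c l"
  have "dim (?W l) < DIM(real^'m)"
    using not_spanning dim_subset_UNIV[of "?W l"] eucl.dim_eq_full[of "?W l"] by linarith
  then obtain d where d: "d \<noteq> 0" "\<And>y. y \<in> span (?W l) \<Longrightarrow> y \<bullet> d = 0"
    using orthogonal_to_subspace_exists by (metis orthogonal_def inner_commute)
  obtain i1 where i1: "column i1 A \<bullet> d \<noteq> 0" using surj_columns_orthogonal_imp_zero[OF surj] d(1) by blast
  define d' where "d' = (if column i1 A \<bullet> d > 0 then d else - d)"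
  have d'_orth: "y \<bullet> d' = 0" if "y \<in> span (?W l)" for y using d(2)[OF that] by (simp add: d'_def)
  have "column i1 A \<bullet> d' > 0" using i1 by (auto simp: d'_def)
  \<comment> \<open>ratio test on the slacks \<open>c$i - column i A \<bullet> l\<close> along the direction \<open>d'\<close>\<close>
  then obtain s i0 where s: "0 \<le> s" "column i0 A \<bullet> d' > 0"
      "c$i0 - column i0 A \<bullet> l - s * (column i0 A \<bullet> d') = 0"
      "\<forall>i. 0 \<le> c$i - column i A \<bullet> l - s * (column i A \<bullet> d')"
    using ex_ratio_step[of "\<chi> i. c$i - column i A \<bullet> l" "\<chi> i. - (column i A \<bullet> d')" i1] feas
    by auto
  define l' where "l' = l + s *\<^sub>R d'"
  have col_l': "column i A \<bullet> l' = column i A \<bullet> l + s * (column i A \<bullet> d')" for i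
    by (simp add: l'_def inner_add_right)
  have active: "column i A \<bullet> d' = 0" if "i \<in> active_set A c l" for i
    using d'_orth[of "column i A"] that by (auto intro: span_base)
  have "active_set A c l \<subseteq> active_set A c l'" using active by (auto simp: active_set_def col_l')
  moreover have "i0 \<in> active_set A c l'" using s(3) by (simp add: active_set_def col_l')
  moreover have "column i0 A \<notin> span (?W l)" using d'_orth s(2) by force
  ultimately have "span (?W l) \<subset> span (?W l')" by (auto intro: span_base dest: span_mono[OF image_mono])
  then have "dim (?W l) < dim (?W l')" by (rule eucl.dim_psubset)
  moreover have "column i A \<bullet> l' \<le> c$i" for i using s(4)[rule_format, of i] by (simp add: col_l')
  ultimately show ?thesis using \<open>active_set A c l \<subseteq> active_set A c l'\<close> by blast
qed

lemma dual_feasible_ex_spanning_active: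
  fixes A :: "real^'d^'m"
  assumes surj: "surj ((*v) A)" and feas: "\<forall>i. column i A \<bullet> l \<le> c$i"
  shows "\<exists>l'. (\<forall>i. column i A \<bullet> l' \<le> c$i) \<and> active_set A c l \<subseteq> active_set A c l'
           \<and> span ((\<lambda>i. column i A) ` active_set A c l') = UNIV"
  using feas
proof (induction "CARD('m) - dim ((\<lambda>i. column i A) ` active_set A c l)" arbitrary: l rule: less_induct)
  case less
  show ?case
  proof (cases "span ((\<lambda>i. column i A) ` active_set A c l) = UNIV")
    case False
    from dual_feasible_extend_active[OF surj less.prems False] obtain l' where
      l': "\<forall>i. column i A \<bullet> l' \<le> c$i" "active_set A c l \<subseteq> active_set A c l'"
        "dim ((\<lambda>i. column i A) ` active_set A c l) < dim ((\<lambda>i. column i A) ` active_set A c l')"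
      by blast
    moreover have "dim ((\<lambda>i. column i A) ` active_set A c l') \<le> CARD('m)"
      using dim_subset_UNIV[of "(\<lambda>i. column i A) ` active_set A c l'"] by simp
    ultimately show ?thesis using less.hyps[of l'] by fastforce
  qed (use less.prems in blast)
qed

lemma column_in_span_if_dependent:
  fixes A :: "real^'d^'m"
  assumes "col_independent A J" "\<not> col_independent A (insert t J)"
  shows "column t A \<in> span ((\<lambda>i. column i A) ` J)"
proof -
  obtain z where z: "supp_in (insert t J) z" "A *v z = 0" "z \<noteq> 0"
    using assms(2) by (auto simp: col_independent_def)
  have "t \<notin> J" using assms by (metis insert_absorb)
  have zt: "z$t \<noteq> 0"
  proof
    assume "z$t = 0"
    then have "supp_in J z" using z(1) by (auto simp: supp_in_def)
    then show False using assms(1) z by (auto simp: col_independent_def)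
  qed
  have "z$t *\<^sub>R column t A + (\<Sum>i\<in>J. z$i *\<^sub>R column i A) = 0"
    using matrix_vector_mult_supp_in[OF z(1), of A] z(2) \<open>t \<notin> J\<close> by simp
  then have eq: "z$t *\<^sub>R column t A = - (\<Sum>i\<in>J. z$i *\<^sub>R column i A)"
    by (simp add: eq_neg_iff_add_eq_0)
  have "column t A = inverse (z$t) *\<^sub>R (z$t *\<^sub>R column t A)" using zt by simp
  also have "\<dots> = (- inverse (z$t)) *\<^sub>R (\<Sum>i\<in>J. z$i *\<^sub>R column i A)" unfolding eq by simp
  also have "\<dots> \<in> span ((\<lambda>i. column i A) ` J)"
    by (intro span_scale span_sum span_base) auto
  finally show ?thesis .
qed

lemma col_independent_spanning_imp_is_basis:
  fixes A :: "real^'d^'m"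
  assumes indep: "col_independent A J" and spanning: "span ((\<lambda>i. column i A) ` J) = UNIV"
  shows "is_basis A J"
proof -
  have lin: "linear ((*v) A)" by simp
  have "span ((\<lambda>i. column i A) ` J) \<subseteq> (*v) A ` Collect (supp_in J)"
  proof (rule span_minimal)
    show "(\<lambda>i. column i A) ` J \<subseteq> (*v) A ` Collect (supp_in J)"
      by (force simp: supp_in_def axis_def matrix_vector_mult_basis[symmetric]
          intro: image_eqI[where x="axis _ 1"])
  qed (rule linear_subspace_image[OF lin subspace_supp_in])
  then have "(*v) A ` Collect (supp_in J) = UNIV" using spanning by auto
  moreover have "dim ((*v) A ` Collect (supp_in J)) = dim (Collect (supp_in J))"
    using eucl.dim_image_eq[OF lin, of "Collect (supp_in J)"] col_independent_inj_on[OF indep]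
    by (simp add: span_eq_iff[THEN iffD2, OF subspace_supp_in])
  ultimately have "card J = CARD('m)" by (simp add: dim_supp_in dim_UNIV)
  then show ?thesis using indep by (simp add: is_basis_iff)
qed

lemma col_independent_extend_to_basis:
  fixes A :: "real^'d^'m"
  assumes "S \<subseteq> T" "col_independent A S" and spanning: "span ((\<lambda>i. column i A) ` T) = UNIV"
  shows "\<exists>I. S \<subseteq> I \<and> I \<subseteq> T \<and> is_basis A I"
proof -
  define F where "F = {J. S \<subseteq> J \<and> J \<subseteq> T \<and> col_independent A J}"
  have "finite F" "S \<in> F" using assms by (auto simp: F_def)
  then obtain J where J: "J \<in> F" and J_max: "\<And>J'. J' \<in> F \<Longrightarrow> card J' \<le> card J"
    using Max_in[of "card ` F"] Max_ge[of "card ` F"] by (metis (no_types, lifting) empty_iff finite_imageI image_iff)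
  have "column t A \<in> span ((\<lambda>i. column i A) ` J)" if "t \<in> T" for t
  proof (cases "t \<in> J")
    case False
    then have "insert t J \<notin> F" using J_max[of "insert t J"] by (auto simp: card_insert_if)
    then show ?thesis using J that by (intro column_in_span_if_dependent) (auto simp: F_def)
  qed (auto intro: span_base)
  then have "span ((\<lambda>i. column i A) ` J) = UNIV"
    using spanning span_minimal[of "(\<lambda>i. column i A) ` T" "span ((\<lambda>i. column i A) ` J)"] by auto
  then show ?thesis using J col_independent_spanning_imp_is_basis by (auto simp: F_def)
qed

lemma weak_duality:
  fixes A :: "real^'d^'m"
  assumes "\<forall>i. column i A \<bullet> l \<le> c$i" "\<forall>i. 0 \<le> y$i"
  shows "l \<bullet> (A *v y) \<le> c \<bullet> y"
proof -
  have "l \<bullet> (A *v y) = (\<Sum>i\<in>UNIV. y$i * (column i A \<bullet> l))" by (rule inner_matrix_vector_mult)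
  also have "\<dots> \<le> (\<Sum>i\<in>UNIV. c$i * y$i)"
    using assms by (intro sum_mono) (metis mult.commute mult_left_mono)
  finally show ?thesis by (simp add: inner_vec_def)
qed

lemma complementary_slackness:
  fixes A :: "real^'d^'m"
  assumes feas: "\<forall>i. column i A \<bullet> l \<le> c$i" and y: "\<forall>i. 0 \<le> y$i"
    and gap: "c \<bullet> y \<le> l \<bullet> (A *v y)" and slack: "column i A \<bullet> l < c$i"
  shows "y$i = 0"
proof -
  have nonneg: "0 \<le> y$j * (c$j - column j A \<bullet> l)" for j using feas y by simp
  have "l \<bullet> (A *v y) = (\<Sum>j\<in>UNIV. y$j * (column j A \<bullet> l))" by (rule inner_matrix_vector_mult)
  moreover have "c \<bullet> y = (\<Sum>j\<in>UNIV. y$j * c$j)" by (simp add: inner_vec_def mult.commute)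
  ultimately have "(\<Sum>j\<in>UNIV. y$j * (c$j - column j A \<bullet> l)) = c \<bullet> y - l \<bullet> (A *v y)"
    by (simp add: right_diff_distrib sum_subtractf)
  moreover have "0 \<le> (\<Sum>j\<in>UNIV. y$j * (c$j - column j A \<bullet> l))" using nonneg by (rule sum_nonneg)
  ultimately have "(\<Sum>j\<in>UNIV. y$j * (c$j - column j A \<bullet> l)) = 0" using gap by linarith
  then have "\<forall>j\<in>UNIV. y$j * (c$j - column j A \<bullet> l) = 0"
    using sum_nonneg_eq_0_iff[of UNIV "\<lambda>j. y$j * (c$j - column j A \<bullet> l)"] nonneg by simp
  then have "y$i * (c$i - column i A \<bullet> l) = 0" by blast
  then show ?thesis using slack by simp
qed

lemma dual_feasible_basis_optimal:
  fixes A :: "real^'d^'m"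
  assumes "dual_feasible_basis A c I" "\<forall>i. 0 \<le> basic_sol A I \<beta> $ i"
  shows "lp_optimal A c \<beta> (basic_sol A I \<beta>)"
proof -
  have I: "is_basis A I" "\<forall>i. column i A \<bullet> dual_sol A c I \<le> c$i"
    using assms(1) by (auto simp: dual_feasible_basis_iff)
  have "c \<bullet> basic_sol A I \<beta> \<le> c \<bullet> y" if "\<forall>i. 0 \<le> y$i" "A *v y = \<beta>" for y
    using inner_basic_sol_dual_sol[OF I(1)] weak_duality[OF I(2) that(1)] that(2) by simp
  then show ?thesis using assms(2) basic_sol[OF I(1)] by (simp add: lp_optimal_def)
qed

lemma lp_optimal_imp_ex_optimal_basis:
  fixes A :: "real^'d^'m"
  assumes surj: "surj ((*v) A)" and opt: "lp_optimal A c \<beta> y"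
  shows "\<exists>I. dual_feasible_basis A c I \<and> (\<forall>i. 0 \<le> basic_sol A I \<beta> $ i)"
proof -
  obtain x where x: "lp_optimal A c \<beta> x" "col_independent A {i. x$i \<noteq> 0}"
    using lp_optimal_ex_col_independent[OF opt] by blast
  obtain l where l: "\<forall>i. column i A \<bullet> l \<le> c$i" "\<forall>i. x$i \<noteq> 0 \<longrightarrow> column i A \<bullet> l = c$i"
    using lp_optimal_dual_certificate[OF x(1)] by blast
  obtain l' where l': "\<forall>i. column i A \<bullet> l' \<le> c$i" "active_set A c l \<subseteq> active_set A c l'"
      "span ((\<lambda>i. column i A) ` active_set A c l') = UNIV"
    using dual_feasible_ex_spanning_active[OF surj l(1)] by blast
  have "{i. x$i \<noteq> 0} \<subseteq> active_set A c l'" using l(2) l'(2) by (auto simp: active_set_def)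
  then obtain I where I: "{i. x$i \<noteq> 0} \<subseteq> I" "I \<subseteq> active_set A c l'" "is_basis A I"
    using col_independent_extend_to_basis[OF _ x(2) l'(3)] by blast
  have "dual_sol A c I = l'" using I by (intro dual_sol_unique) (auto simp: active_set_def)
  then have "dual_feasible_basis A c I" using I(3) l'(1) by (simp add: dual_feasible_basis_iff)
  moreover have "basic_sol A I \<beta> = x"
    using I(1) x(1) by (intro basic_sol_unique[OF I(3)]) (auto simp: supp_in_def lp_optimal_def)
  ultimately show ?thesis using x(1) by (auto simp: lp_optimal_def)
qed

lemma is_basis_exchange:
  fixes A :: "real^'d^'m"
  assumes I: "is_basis A I" and "t \<notin> I" "j \<in> I"
    and pivot: "basic_sol A I (column t A) $ j \<noteq> 0"
  shows "is_basis A (insert t (I - {j}))"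
proof -
  let ?\<beta> = "basic_sol A I (column t A)"
  have "card I > 0" using \<open>j \<in> I\<close> by (auto simp: card_gt_0_iff)
  then have card: "card (insert t (I - {j})) = card I"
    using assms by (simp add: card_insert_if card_Diff_singleton)
  have "z = 0" if z: "supp_in (insert t (I - {j})) z" "A *v z = 0" for z
  proof -
    define z' where "z' = (\<chi> i. if i = j \<or> i = t then 0 else z$i)"
    \<comment> \<open>replacing column \<open>t\<close> by its expansion in the basis \<open>I\<close> gives a kernel vector supported on \<open>I\<close>\<close>
    define w where "w = z$t *\<^sub>R ?\<beta> + z'"
    have w_nth: "w$i = z$t * ?\<beta>$i + (if i = j \<or> i = t then 0 else z$i)" for i
      by (simp add: w_def z'_def)
    have "z = z$t *\<^sub>R axis t 1 + z'"
      using z(1) \<open>j \<in> I\<close> \<open>t \<notin> I\<close> by (auto simp: vec_eq_iff supp_in_def axis_def z'_def)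
    then have "A *v w = A *v z"
      using basic_sol(2)[OF I, of "column t A"]
      by (metis w_def matrix_vector_right_distrib matrix_vector_mult_scaleR matrix_vector_mult_basis)
    moreover have "supp_in I w"
      using z(1) basic_sol(1)[OF I, of "column t A"] \<open>t \<notin> I\<close> by (auto simp: supp_in_def w_nth)
    ultimately have w0: "w = 0" using I z(2) by (auto simp: is_basis_iff col_independent_def)
    then have "z$t = 0" using w_nth[of j] pivot by simp
    then show "z = 0" using w0 z(1) \<open>t \<notin> I\<close>
      by (auto simp: vec_eq_iff w_nth supp_in_def split: if_splits)
  qed
  then show ?thesis using card I by (simp add: is_basis_iff col_independent_def)
qed

lemma closed_Hcone: "is_basis A I \<Longrightarrow> closed (Hcone A c b I)"
proof -
  assume I: "is_basis A I"
  have "Hcone A c b I = (\<Inter>i\<in>I - Pos A c b. {v. 0 \<le> basic_sol A I v $ i})" by (auto simp: Hcone_def)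
  moreover have "closed {v. 0 \<le> basic_sol A I v $ i}" for i
    by (intro closed_Collect_le continuous_on_const continuous_on_component continuous_on_basic_sol I)
  ultimately show ?thesis by auto
qed

lemma borel_measurable_basic_sol: "is_basis A I \<Longrightarrow> basic_sol A I \<in> borel_measurable borel"
  by (intro borel_measurable_continuous_onI continuous_on_basic_sol)

lemma borel_measurable_limit_map:
  assumes "\<forall>I\<in>set Is. is_basis A I"
  shows "limit_map A c b Is \<in> borel_measurable borel"
proof -
  have "Hcone A c b (Is ! k) \<in> sets borel" if "k < length Is" for k
    using assms that by (intro borel_closed closed_Hcone) auto
  then show ?thesis unfolding limit_map_def[abs_def] using assms
    by (intro borel_measurable_sum borel_measurable_scaleR borel_measurable_indicator
        borel_measurable_basic_sol sets.Diff sets.finite_UN) auto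
qed

lemma borel_measurable_limit_map_simple:
  assumes "\<forall>I\<in>set Is. is_basis A I"
  shows "limit_map_simple A c b Is \<in> borel_measurable borel"
  unfolding limit_map_simple_def[abs_def] using assms
  by (intro borel_measurable_sum borel_measurable_scaleR borel_measurable_indicator
      borel_measurable_basic_sol borel_closed closed_Hcone) auto

lemma hyperplane_null_sets_lborel:
  fixes a :: "'a::euclidean_space"
  assumes "a \<noteq> 0"
  shows "{v. a \<bullet> v = 0} \<in> null_sets lborel"
proof -
  have "{v. a \<bullet> v = 0} \<in> null_sets lebesgue"
    using negligible_hyperplane[of a 0] assms by (simp add: negligible_iff_null_sets)
  moreover have "{v. a \<bullet> v = 0} \<in> sets lborel" by (simp add: borel_closed closed_hyperplane)
  ultimately show ?thesis using null_sets_completion_iff by blast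
qed

section \<open>Perturbations of a dual nondegenerate problem\<close>

locale lp_perturbation =
  fixes A :: "real^'d^'m" and b :: "real^'m" and c :: "real^'d" and Is :: "'d set list"
  assumes surj: "surj ((*v) A)"
    and set_Is: "set Is = {I. dual_feasible_basis A c I \<and> (\<forall>i. 0 \<le> basic_sol A I b $ i)}"
    and unique_optimum: "\<exists>!x. lp_optimal A c b x"
    and dual_sol_distinct: "distinct (map (dual_sol A c) Is)"
begin

abbreviation "xstar \<equiv> lp_xstar A c b"

lemma xstar_optimal: "lp_optimal A c b xstar"
  unfolding lp_xstar_def using theI'[OF unique_optimum] .

lemma xstar_unique: "lp_optimal A c b x \<Longrightarrow> x = xstar"
  using unique_optimum xstar_optimal by blast

lemma xstar_nonneg: "0 \<le> xstar$i"
  using xstar_optimal by (simp add: lp_optimal_def)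

lemma Pos_eq: "Pos A c b = {i. xstar$i \<noteq> 0}"
  using xstar_nonneg by (auto simp: Pos_def less_le)

lemma Is_dual_feasible: "I \<in> set Is \<Longrightarrow> dual_feasible_basis A c I"
  using set_Is by auto

lemma Is_basis: "I \<in> set Is \<Longrightarrow> is_basis A I"
  using Is_dual_feasible by (simp add: dual_feasible_basis_def)

lemma Is_dual_le: "I \<in> set Is \<Longrightarrow> column i A \<bullet> dual_sol A c I \<le> c$i"
  using Is_dual_feasible by (simp add: dual_feasible_basis_iff)

lemma Is_basic_sol_b: "I \<in> set Is \<Longrightarrow> basic_sol A I b = xstar"
  using dual_feasible_basis_optimal[OF Is_dual_feasible] set_Is xstar_unique by auto

lemma Pos_subset_Is: "I \<in> set Is \<Longrightarrow> Pos A c b \<subseteq> I"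
  using basic_sol(1)[OF Is_basis, of I b] Is_basic_sol_b by (auto simp: Pos_eq supp_in_def)

lemma basic_sol_b_add: "I \<in> set Is \<Longrightarrow> basic_sol A I (b + w) = xstar + basic_sol A I w"
  using basic_sol_add[OF Is_basis] Is_basic_sol_b by simp

lemma xstar_no_zero_cost_direction:
  assumes "A *v z = 0" "c \<bullet> z = 0" "\<forall>i. xstar$i = 0 \<longrightarrow> 0 \<le> z$i"
  shows "z = 0"
proof -
  obtain e where e: "e > 0" "\<forall>i. 0 \<le> (xstar + e *\<^sub>R z)$i"
    using ex_pos_step_nonneg[of xstar z] xstar_nonneg assms(3) by auto
  have "lp_optimal A c b (xstar + e *\<^sub>R z)"
    using xstar_optimal e(2) assms(1,2)
    by (simp add: lp_optimal_def matrix_vector_right_distrib matrix_vector_mult_scaleR inner_add_right)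
  then show ?thesis using xstar_unique e(1) by fastforce
qed

lemma Is_exchange:
  assumes I: "I \<in> set Is" and t: "t \<in> active_set A c (dual_sol A c I)" "t \<notin> I"
    and j: "j \<in> I - Pos A c b" "basic_sol A I (column t A) $ j \<noteq> 0"
  defines "I' \<equiv> insert t (I - {j})"
  shows "I' \<in> set Is" "dual_sol A c I' = dual_sol A c I"
proof -
  have B: "is_basis A I'" unfolding I'_def using is_basis_exchange[OF Is_basis[OF I]] t j by blast
  show dual: "dual_sol A c I' = dual_sol A c I"
    using dual_sol[OF Is_basis[OF I]] t(1) by (intro dual_sol_unique[OF B]) (auto simp: I'_def active_set_def)
  have "basic_sol A I' b = xstar"
    using Pos_subset_Is[OF I] j xstar_optimal
    by (intro basic_sol_unique[OF B]) (auto simp: supp_in_def I'_def Pos_eq lp_optimal_def)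
  then show "I' \<in> set Is"
    using B dual Is_dual_le[OF I] xstar_nonneg set_Is by (simp add: dual_feasible_basis_iff)
qed

lemma Is_active_subset: "I \<in> set Is \<Longrightarrow> active_set A c (dual_sol A c I) \<subseteq> I"
proof (rule subsetI, rule ccontr)
  fix t assume I: "I \<in> set Is" and t: "t \<in> active_set A c (dual_sol A c I)" "t \<notin> I"
  define \<beta> where "\<beta> = basic_sol A I (column t A)"
  have \<beta>: "supp_in I \<beta>" "A *v \<beta> = column t A" using basic_sol[OF Is_basis[OF I]] by (auto simp: \<beta>_def)
  show False
  proof (cases "\<exists>j\<in>I - Pos A c b. \<beta>$j \<noteq> 0")
    case True
    \<comment> \<open>a degenerate pivot yields a second basis in \<open>Is\<close> with the same dual solution\<close>
    then obtain j where j: "j \<in> I - Pos A c b" "\<beta>$j \<noteq> 0" by blast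
    have "insert t (I - {j}) \<noteq> I" using t(2) by blast
    then show False using Is_exchange[OF I t j[unfolded \<beta>_def]] I dual_sol_distinct
      by (auto simp: distinct_map inj_on_def)
  next
    case False
    \<comment> \<open>otherwise \<open>e\<^sub>t - \<beta>\<close> is a zero-cost feasible direction at the unique optimum\<close>
    define z where "z = axis t 1 - \<beta>"
    have "A *v z = 0" using \<beta>(2) by (simp add: z_def matrix_vector_mult_diff_distrib matrix_vector_mult_basis)
    moreover have "c \<bullet> z = 0"
      using inner_basic_sol_dual_sol[OF Is_basis[OF I], of c "column t A"] t(1)
      by (simp add: z_def \<beta>_def inner_diff_right inner_axis active_set_def inner_commute)
    moreover have "\<beta>$i = 0" if "xstar$i = 0" for i
      using False \<beta>(1) that by (auto simp: Pos_eq supp_in_def)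
    ultimately have "z = 0" by (intro xstar_no_zero_cost_direction) (auto simp: z_def axis_def)
    moreover have "z$t = 1" using \<beta>(1) t(2) by (simp add: z_def supp_in_def)
    ultimately show False by simp
  qed
qed

lemma Is_dual_slack: "I \<in> set Is \<Longrightarrow> i \<notin> I \<Longrightarrow> column i A \<bullet> dual_sol A c I < c$i"
  using Is_dual_le[of I i] Is_active_subset[of I] by (force simp: active_set_def less_le)

lemma Is_optimal_unique:
  assumes I: "I \<in> set Is" and nonneg: "\<forall>i. 0 \<le> basic_sol A I \<beta> $ i" and y: "lp_optimal A c \<beta> y"
  shows "y = basic_sol A I \<beta>"
proof -
  have y_feas: "\<forall>i. 0 \<le> y$i" "A *v y = \<beta>" using y by (auto simp: lp_optimal_def)
  have "c \<bullet> y \<le> c \<bullet> basic_sol A I \<beta>"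
    using y nonneg basic_sol(2)[OF Is_basis[OF I]] by (auto simp: lp_optimal_def)
  then have gap: "c \<bullet> y \<le> dual_sol A c I \<bullet> (A *v y)"
    using inner_basic_sol_dual_sol[OF Is_basis[OF I]] y_feas(2) by simp
  have "supp_in I y"
    using complementary_slackness[OF _ y_feas(1) gap Is_dual_slack[OF I]] Is_dual_le[OF I]
    by (auto simp: supp_in_def)
  then show ?thesis using basic_sol_unique[OF Is_basis[OF I] _ y_feas(2)] by simp
qed

lemma eventually_optimal_basis_in_Is:
  "\<forall>\<^sub>F w in nhds 0. \<forall>I. dual_feasible_basis A c I \<and> (\<forall>i. 0 \<le> basic_sol A I (b + w) $ i) \<longrightarrow> I \<in> set Is"
proof -
  have "\<forall>\<^sub>F w in nhds 0. \<not> (\<forall>i. 0 \<le> basic_sol A I (b + w) $ i)"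
    if I: "I \<in> {I. dual_feasible_basis A c I \<and> I \<notin> set Is}" for I
  proof -
    obtain i where i: "basic_sol A I b $ i < 0" using I set_Is by (auto simp: not_le)
    have "isCont (basic_sol A I) (b + 0)"
      using I by (intro linear_continuous_at linear_conv_bounded_linear[THEN iffD1] linear_basic_sol)
        (simp add: dual_feasible_basis_def)
    then have "((\<lambda>w. basic_sol A I (b + w) $ i) \<longlongrightarrow> basic_sol A I (b + 0) $ i) (nhds 0)"
      by (intro tendsto_vec_nth isCont_tendsto_compose[where g="basic_sol A I"] tendsto_add
          tendsto_const filterlim_ident)
    then have "((\<lambda>w. basic_sol A I (b + w) $ i) \<longlongrightarrow> basic_sol A I b $ i) (nhds 0)" by simp
    from order_tendstoD(2)[OF this i] show ?thesis by (rule eventually_mono) (auto simp: not_le)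
  qed
  then have "\<forall>\<^sub>F w in nhds 0. \<forall>I\<in>{I. dual_feasible_basis A c I \<and> I \<notin> set Is}.
      \<not> (\<forall>i. 0 \<le> basic_sol A I (b + w) $ i)"
    by (intro eventually_ball_finite) auto
  then show ?thesis by (rule eventually_mono) blast
qed

lemma eventually_optimal_eq_basic_sol:
  "\<forall>\<^sub>F w in nhds 0. \<forall>y. lp_optimal A c (b + w) y \<longrightarrow>
      (\<exists>I\<in>set Is. w \<in> Hcone A c b I \<and> y = xstar + basic_sol A I w)"
  using eventually_optimal_basis_in_Is
proof eventually_elim
  case (elim w)
  show ?case
  proof (intro allI impI)
    fix y assume y: "lp_optimal A c (b + w) y"
    obtain I where I: "dual_feasible_basis A c I" "\<forall>i. 0 \<le> basic_sol A I (b + w) $ i"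
      using lp_optimal_imp_ex_optimal_basis[OF surj y] by blast
    then have "I \<in> set Is" using elim by blast
    moreover have "y = xstar + basic_sol A I w"
      using Is_optimal_unique[OF \<open>I \<in> set Is\<close> I(2) y] basic_sol_b_add[OF \<open>I \<in> set Is\<close>] by simp
    moreover have "w \<in> Hcone A c b I"
    proof -
      have "0 \<le> xstar$i + basic_sol A I w $ i" for i
        using I(2) basic_sol_b_add[OF \<open>I \<in> set Is\<close>, of w] by (metis vector_add_component)
      then show ?thesis unfolding Hcone_def Pos_eq by (simp add: Ball_def) (metis add_0)
    qed
    ultimately show "\<exists>I\<in>set Is. w \<in> Hcone A c b I \<and> y = xstar + basic_sol A I w" by blast
  qed
qed

lemma Hcone_basic_sol_nonneg:
  assumes "I \<in> set Is" "w \<in> Hcone A c b I" "xstar$i = 0"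
  shows "0 \<le> basic_sol A I w $ i"
  using assms basic_sol(1)[OF Is_basis[OF assms(1)], of w] by (cases "i \<in> I") (auto simp: Hcone_def Pos_eq supp_in_def)

lemma Hcone_scaleR: "I \<in> set Is \<Longrightarrow> w \<in> Hcone A c b I \<Longrightarrow> 0 \<le> t \<Longrightarrow> t *\<^sub>R w \<in> Hcone A c b I"
  using basic_sol_scaleR[OF Is_basis] by (auto simp: Hcone_def)

lemma basic_sol_eq_on_Hcone_inter:
  assumes I: "I \<in> set Is" "w \<in> Hcone A c b I" and J: "J \<in> set Is" "w \<in> Hcone A c b J"
  shows "basic_sol A I w = basic_sol A J w"
proof -
  \<comment> \<open>for small \<open>t > 0\<close> both bases stay primal feasible at \<open>b + t w\<close>, and the optimum there is unique\<close>
  obtain eI where eI: "eI > 0" "\<forall>t. 0 \<le> t \<and> t \<le> eI \<longrightarrow> (\<forall>i. 0 \<le> (xstar + t *\<^sub>R basic_sol A I w)$i)"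
    using ex_pos_step_nonneg[of xstar] xstar_nonneg Hcone_basic_sol_nonneg[OF I] by blast
  obtain eJ where eJ: "eJ > 0" "\<forall>t. 0 \<le> t \<and> t \<le> eJ \<longrightarrow> (\<forall>i. 0 \<le> (xstar + t *\<^sub>R basic_sol A J w)$i)"
    using ex_pos_step_nonneg[of xstar] xstar_nonneg Hcone_basic_sol_nonneg[OF J] by blast
  define t where "t = min eI eJ"
  have t: "t > 0" "t \<le> eI" "t \<le> eJ" using eI eJ by (simp_all add: t_def)
  have sol: "basic_sol A K (b + t *\<^sub>R w) = xstar + t *\<^sub>R basic_sol A K w" if "K \<in> set Is" for K
    using basic_sol_b_add[OF that] basic_sol_scaleR[OF Is_basis[OF that]] by simp
  have nonneg: "\<forall>i. 0 \<le> basic_sol A I (b + t *\<^sub>R w) $ i" "\<forall>i. 0 \<le> basic_sol A J (b + t *\<^sub>R w) $ i"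
    using eI(2) eJ(2) t by (simp_all add: sol[OF I(1)] sol[OF J(1)] del: vector_add_component)
  have "basic_sol A J (b + t *\<^sub>R w) = basic_sol A I (b + t *\<^sub>R w)"
    using Is_optimal_unique[OF I(1) nonneg(1)]
      dual_feasible_basis_optimal[OF Is_dual_feasible[OF J(1)] nonneg(2)] by blast
  then show ?thesis using t by (simp add: sol[OF I(1)] sol[OF J(1)])
qed

lemma limit_map_eq_basic_sol:
  assumes I: "I \<in> set Is" and w: "w \<in> Hcone A c b I"
  shows "limit_map A c b Is w = basic_sol A I w"
proof -
  let ?H = "\<lambda>k. Hcone A c b (Is ! k)"
  obtain k1 where k1: "k1 < length Is" "Is ! k1 = I" using I by (auto simp: in_set_conv_nth)
  define k0 where "k0 = (LEAST k. k < length Is \<and> w \<in> ?H k)"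
  have k0: "k0 < length Is \<and> w \<in> ?H k0"
    unfolding k0_def by (rule LeastI[of _ k1]) (use k1 w in simp)
  have before: "w \<notin> ?H j" if "j < k0" for j
    using not_less_Least[OF that[unfolded k0_def]] that k0 by simp
  have "indicator (?H k - (\<Union>j<k. ?H j)) w *\<^sub>R basic_sol A (Is ! k) w
      = (if k = k0 then basic_sol A (Is ! k) w else 0)" for k
    using k0 before by (cases k k0 rule: linorder_cases) (auto simp: indicator_def)
  then have "limit_map A c b Is w = basic_sol A (Is ! k0) w"
    unfolding limit_map_def using k0 by simp
  also have "\<dots> = basic_sol A I w" using basic_sol_eq_on_Hcone_inter[OF _ conjunct2[OF k0] I w] k0 by simp
  finally show ?thesis .
qed

lemma eventually_scaled_optimal_eq_limit_map:
  "\<forall>\<^sub>F w in nhds 0. \<forall>y t. lp_optimal A c (b + w) y \<longrightarrow> 0 \<le> t \<longrightarrow>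
      t *\<^sub>R w \<in> (\<Union>I\<in>set Is. Hcone A c b I) \<and> t *\<^sub>R (y - xstar) = limit_map A c b Is (t *\<^sub>R w)"
  using eventually_optimal_eq_basic_sol
proof eventually_elim
  case (elim w)
  show ?case
  proof (intro allI impI)
    fix y and t :: real assume y: "lp_optimal A c (b + w) y" and t: "0 \<le> t"
    then obtain I where I: "I \<in> set Is" "w \<in> Hcone A c b I" "y = xstar + basic_sol A I w"
      using elim by blast
    have tw: "t *\<^sub>R w \<in> Hcone A c b I" by (rule Hcone_scaleR[OF I(1,2) t])
    have "t *\<^sub>R (y - xstar) = basic_sol A I (t *\<^sub>R w)" using I(3) basic_sol_scaleR[OF Is_basis[OF I(1)]] by simp
    also have "\<dots> = limit_map A c b Is (t *\<^sub>R w)" using limit_map_eq_basic_sol[OF I(1) tw] by simp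
    finally show "t *\<^sub>R w \<in> (\<Union>I\<in>set Is. Hcone A c b I) \<and> t *\<^sub>R (y - xstar) = limit_map A c b Is (t *\<^sub>R w)"
      using tw I(1) by blast
  qed
qed

lemma continuous_on_limit_map: "continuous_on (\<Union>I\<in>set Is. Hcone A c b I) (limit_map A c b Is)"
proof (rule continuous_on_closed_Union)
  fix I assume I: "I \<in> set Is"
  show "closed (Hcone A c b I)" by (rule closed_Hcone[OF Is_basis[OF I]])
  show "continuous_on (Hcone A c b I) (limit_map A c b Is)"
    using continuous_on_basic_sol[OF Is_basis[OF I]]
    by (rule continuous_on_cong[THEN iffD1, rotated 2]) (auto simp: limit_map_eq_basic_sol[OF I])
qed simp

lemma limit_map_simple_eq_limit_map:
  assumes "\<forall>j k. j < k \<longrightarrow> k < length Is \<longrightarrow> dual_sol A c (Is ! j) \<bullet> v \<noteq> dual_sol A c (Is ! k) \<bullet> v"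
  shows "limit_map_simple A c b Is v = limit_map A c b Is v"
proof -
  \<comment> \<open>on a common cone two bases have equal basic solutions, hence equal costs \<open>dual_sol \<bullet> v\<close>\<close>
  have "v \<notin> Hcone A c b (Is ! j)" if jk: "j < k" "k < length Is" and vk: "v \<in> Hcone A c b (Is ! k)" for j k
  proof
    assume "v \<in> Hcone A c b (Is ! j)"
    then have "basic_sol A (Is ! j) v = basic_sol A (Is ! k) v"
      using jk vk by (intro basic_sol_eq_on_Hcone_inter) auto
    then have "dual_sol A c (Is ! j) \<bullet> v = dual_sol A c (Is ! k) \<bullet> v"
      using jk inner_basic_sol_dual_sol[OF Is_basis, of _ c v] by (metis nth_mem order.strict_trans)
    then show False using assms jk by blast
  qed
  then show ?thesis
    unfolding limit_map_simple_def limit_map_def by (intro sum.cong refl) (auto simp: indicator_def)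
qed

lemma AE_limit_map_simple_eq:
  assumes "absolutely_continuous lborel \<mu>"
  shows "AE v in \<mu>. limit_map_simple A c b Is v = limit_map A c b Is v"
proof -
  define N where "N = (\<Union>(j, k)\<in>{(j, k). j < k \<and> k < length Is}.
    {v. (dual_sol A c (Is ! j) - dual_sol A c (Is ! k)) \<bullet> v = 0})"
  have "N \<in> null_sets lborel"
    unfolding N_def
  proof (rule null_sets_UN', goal_cases)
    case 1
    show ?case by (rule countable_finite, rule finite_subset[of _ "{..<length Is} \<times> {..<length Is}"]) auto
  next
    case (2 jk)
    then have "dual_sol A c (Is ! fst jk) \<noteq> dual_sol A c (Is ! snd jk)"
      using dual_sol_distinct by (auto simp: distinct_conv_nth)
    then show ?case by (auto intro: hyperplane_null_sets_lborel split: prod.splits)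
  qed
  then have "AE v in \<mu>. v \<notin> N" using assms by (auto simp: absolutely_continuous_def intro: AE_not_in)
  then show ?thesis
    by (rule AE_mp[OF _ AE_I2]) (auto simp: N_def inner_diff_left intro!: limit_map_simple_eq_limit_map)
qed

end

section \<open>Convergence in distribution\<close>

lemma (in prob_space) measure_le_expectation:
  assumes g: "g \<in> borel_measurable M" "\<And>\<omega>. \<omega> \<in> space M \<Longrightarrow> 0 \<le> g \<omega> \<and> g \<omega> \<le> 1"
    and E: "E \<subseteq> space M" "\<And>\<omega>. \<omega> \<in> E \<Longrightarrow> 1 \<le> g \<omega>"
  shows "measure M E \<le> expectation g"
proof -
  have "integrable M g" using g by (intro integrable_const_bound[where B=1]) auto
  have "measure M E \<le> measure M {\<omega> \<in> space M. 1 \<le> g \<omega>}"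
    using E g(1) by (intro finite_measure_mono) auto
  also have "\<dots> \<le> expectation g / 1"
    using \<open>integrable M g\<close> g by (intro integral_Markov_inequality_measure[where A="space M"]) auto
  finally show ?thesis by simp
qed

lemma conv_distr_continuous_map:
  fixes X :: "nat \<Rightarrow> 'a \<Rightarrow> 'b::euclidean_space" and g :: "'b \<Rightarrow> 'c::euclidean_space"
  assumes conv: "conv_distr (\<lambda>n. distr M borel (X n)) \<mu>" and X: "\<And>n. X n \<in> borel_measurable M"
    and sets_\<mu>: "sets \<mu> = sets borel" and g: "continuous_on UNIV g"
  shows "conv_distr (\<lambda>n. distr M borel (\<lambda>\<omega>. g (X n \<omega>))) (distr \<mu> borel g)"
  unfolding conv_distr_def
proof (intro allI impI)
  fix f :: "'c \<Rightarrow> real" assume f: "continuous_on UNIV f \<and> bounded (range f)"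
  have gm: "g \<in> borel_measurable borel" using g by (rule borel_measurable_continuous_onI)
  have fm: "f \<in> borel_measurable borel" using f borel_measurable_continuous_onI by blast
  have "continuous_on UNIV (\<lambda>x. f (g x)) \<and> bounded (range (\<lambda>x. f (g x)))"
    using continuous_on_compose2[of UNIV f UNIV g] f g by (auto intro: bounded_subset)
  then have "(\<lambda>n. integral\<^sup>L (distr M borel (X n)) (\<lambda>x. f (g x))) \<longlonglongrightarrow> integral\<^sup>L \<mu> (\<lambda>x. f (g x))"
    using conv by (simp add: conv_distr_def)
  moreover have "integral\<^sup>L (distr M borel (\<lambda>\<omega>. g (X n \<omega>))) f = integral\<^sup>L (distr M borel (X n)) (\<lambda>x. f (g x))" for n
    using integral_distr[OF measurable_compose[OF X gm] fm] integral_distr[OF X measurable_compose[OF gm fm]]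
    by simp
  moreover have "integral\<^sup>L (distr \<mu> borel g) f = integral\<^sup>L \<mu> (\<lambda>x. f (g x))"
    using integral_distr[of g \<mu> borel f] gm fm sets_\<mu> by (simp add: measurable_cong_sets[OF sets_\<mu> refl])
  ultimately show "(\<lambda>n. integral\<^sup>L (distr M borel (\<lambda>\<omega>. g (X n \<omega>))) f) \<longlonglongrightarrow> integral\<^sup>L (distr \<mu> borel g) f"
    by simp
qed

lemma (in prob_space) expectation_diff_le_if_eq_on:
  fixes Y Z :: "'a \<Rightarrow> 'b::euclidean_space"
  assumes Y: "Y \<in> borel_measurable M" and Z: "Z \<in> borel_measurable M"
    and f: "f \<in> borel_measurable borel" "\<And>x. \<bar>f x\<bar> \<le> B"
    and E: "E \<in> events" "\<forall>\<omega>\<in>E. Y \<omega> = Z \<omega>"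
  shows "\<bar>expectation (\<lambda>\<omega>. f (Z \<omega>)) - expectation (\<lambda>\<omega>. f (Y \<omega>))\<bar> \<le> 2 * B * (1 - prob E)"
proof -
  have int: "integrable M (\<lambda>\<omega>. f (X \<omega>))" if "X \<in> borel_measurable M" for X :: "'a \<Rightarrow> 'b"
    using f by (intro integrable_const_bound[where B=B] measurable_compose[OF that]) auto
  have ind: "integrable M (indicator (space M - E) :: 'a \<Rightarrow> real)"
    using E by (intro integrable_real_indicator) (auto simp: emeasure_eq_measure)
  have "\<bar>expectation (\<lambda>\<omega>. f (Z \<omega>)) - expectation (\<lambda>\<omega>. f (Y \<omega>))\<bar>
      = \<bar>expectation (\<lambda>\<omega>. f (Z \<omega>) - f (Y \<omega>))\<bar>"
    using int[OF Y] int[OF Z] by (simp add: Bochner_Integration.integral_diff)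
  also have "\<dots> \<le> expectation (\<lambda>\<omega>. \<bar>f (Z \<omega>) - f (Y \<omega>)\<bar>)"
    using integral_norm_bound[of M "\<lambda>\<omega>. f (Z \<omega>) - f (Y \<omega>)"] by simp
  also have "\<dots> \<le> expectation (\<lambda>\<omega>. 2 * B * indicator (space M - E) \<omega>)"
  proof (rule integral_mono)
    show "integrable M (\<lambda>\<omega>. \<bar>f (Z \<omega>) - f (Y \<omega>)\<bar>)"
      using int[OF Y] int[OF Z] by (intro integrable_abs Bochner_Integration.integrable_diff)
    show "integrable M (\<lambda>\<omega>. 2 * B * indicator (space M - E) \<omega>)" using ind by simp
    show "\<bar>f (Z \<omega>) - f (Y \<omega>)\<bar> \<le> 2 * B * indicator (space M - E) \<omega>" if "\<omega> \<in> space M" for \<omega>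
      using E(2) that f(2)[of "Z \<omega>"] f(2)[of "Y \<omega>"] by (auto simp: indicator_def)
  qed
  also have "\<dots> = 2 * B * (1 - prob E)" using E(1) by (simp add: prob_compl)
  finally show ?thesis .
qed

lemma conv_distr_eventually_eq:
  fixes Y Z :: "nat \<Rightarrow> 'a \<Rightarrow> 'b::euclidean_space"
  assumes M: "prob_space M" and conv: "conv_distr (\<lambda>n. distr M borel (Y n)) \<nu>"
    and Y: "\<And>n. Y n \<in> borel_measurable M" and Z: "\<And>n. Z n \<in> borel_measurable M"
    and eq: "eventually (\<lambda>n. E n \<in> sets M \<and> (\<forall>\<omega>\<in>E n. Y n \<omega> = Z n \<omega>)) sequentially"
    and E1: "(\<lambda>n. measure M (E n)) \<longlonglongrightarrow> 1"
  shows "conv_distr (\<lambda>n. distr M borel (Z n)) \<nu>"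
  unfolding conv_distr_def
proof (intro allI impI)
  interpret prob_space M by (rule M)
  fix f :: "'b \<Rightarrow> real" assume f: "continuous_on UNIV f \<and> bounded (range f)"
  obtain B where B: "\<And>x. \<bar>f x\<bar> \<le> B" using f by (auto simp: bounded_iff)
  have fm: "f \<in> borel_measurable borel" using f borel_measurable_continuous_onI by blast
  have distY: "integral\<^sup>L (distr M borel (Y n)) f = expectation (\<lambda>\<omega>. f (Y n \<omega>))" for n
    using integral_distr[OF Y fm] .
  have distZ: "integral\<^sup>L (distr M borel (Z n)) f = expectation (\<lambda>\<omega>. f (Z n \<omega>))" for n
    using integral_distr[OF Z fm] .
  have "(\<lambda>n. expectation (\<lambda>\<omega>. f (Z n \<omega>)) - expectation (\<lambda>\<omega>. f (Y n \<omega>))) \<longlonglongrightarrow> 0"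
  proof (rule Lim_null_comparison)
    show "eventually (\<lambda>n. norm (expectation (\<lambda>\<omega>. f (Z n \<omega>)) - expectation (\<lambda>\<omega>. f (Y n \<omega>)))
        \<le> 2 * B * (1 - measure M (E n))) sequentially"
      using eq by eventually_elim (use expectation_diff_le_if_eq_on[OF Y Z fm B] in auto)
    show "(\<lambda>n. 2 * B * (1 - measure M (E n))) \<longlonglongrightarrow> 0"
      using tendsto_mult[OF tendsto_const tendsto_diff[OF tendsto_const E1], of "2 * B" 1] by simp
  qed
  moreover have "(\<lambda>n. expectation (\<lambda>\<omega>. f (Y n \<omega>))) \<longlonglongrightarrow> integral\<^sup>L \<nu> f"
    using conv[unfolded conv_distr_def, rule_format, OF f] unfolding distY .
  ultimately have "(\<lambda>n. (expectation (\<lambda>\<omega>. f (Z n \<omega>)) - expectation (\<lambda>\<omega>. f (Y n \<omega>)))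
      + expectation (\<lambda>\<omega>. f (Y n \<omega>))) \<longlonglongrightarrow> 0 + integral\<^sup>L \<nu> f"
    by (rule tendsto_add)
  then show "(\<lambda>n. integral\<^sup>L (distr M borel (Z n)) f) \<longlonglongrightarrow> integral\<^sup>L \<nu> f"
    unfolding distZ by simp
qed

lemma ex_ramp_integral_less:
  fixes \<mu> :: "'b::euclidean_space measure"
  assumes "prob_space \<mu>" "sets \<mu> = sets borel" "0 < \<epsilon>"
  shows "\<exists>K\<ge>0. (\<integral>v. min 1 (max 0 (norm v - K)) \<partial>\<mu>) < \<epsilon>"
proof -
  interpret prob_space \<mu> by fact
  have meas: "(\<lambda>v. min 1 (max 0 (norm v - K))) \<in> borel_measurable \<mu>" for K :: real
    unfolding measurable_cong_sets[OF assms(2) refl]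
    by (intro borel_measurable_continuous_onI continuous_intros)
  have "(\<lambda>k. \<integral>v. min 1 (max 0 (norm v - real k)) \<partial>\<mu>) \<longlonglongrightarrow> (\<integral>v. 0 \<partial>\<mu>)"
  proof (rule integral_dominated_convergence[where w="\<lambda>v. 1"])
    show "AE v in \<mu>. (\<lambda>k. min 1 (max 0 (norm v - real k))) \<longlonglongrightarrow> 0"
    proof (rule AE_I2)
      fix v :: 'b
      obtain k0 :: nat where "norm v \<le> real k0" using real_arch_simple by blast
      then have "eventually (\<lambda>k. min 1 (max 0 (norm v - real k)) = 0) sequentially"
        unfolding eventually_sequentially by (intro exI[of _ k0]) auto
      then show "(\<lambda>k. min 1 (max 0 (norm v - real k))) \<longlonglongrightarrow> 0" by (rule tendsto_eventually)
    qed
  qed (use meas in auto)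
  then have "eventually (\<lambda>k. (\<integral>v. min 1 (max 0 (norm v - real k)) \<partial>\<mu>) < \<epsilon>) sequentially"
    using order_tendstoD(2) assms(3) by simp
  then obtain k :: nat where "(\<integral>v. min 1 (max 0 (norm v - real k)) \<partial>\<mu>) < \<epsilon>"
    by (auto simp: eventually_sequentially)
  then show ?thesis by (intro exI[of _ "real k"]) auto
qed

lemma conv_distr_scaled_imp_prob_tendsto_0:
  fixes W :: "nat \<Rightarrow> 'a \<Rightarrow> 'b::euclidean_space"
  assumes M: "prob_space M" and \<mu>: "prob_space \<mu>" "sets \<mu> = sets borel"
    and conv: "conv_distr (\<lambda>n. distr M borel (\<lambda>\<omega>. r n *\<^sub>R W n \<omega>)) \<mu>"
    and W: "\<And>n. W n \<in> borel_measurable M"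
    and r: "filterlim r at_top sequentially" and \<delta>: "0 < \<delta>"
  shows "(\<lambda>n. measure M {\<omega> \<in> space M. \<delta> \<le> norm (W n \<omega>)}) \<longlonglongrightarrow> 0"
proof (rule order_tendstoI)
  interpret M: prob_space M by (rule M)
  show "eventually (\<lambda>n. a < measure M {\<omega> \<in> space M. \<delta> \<le> norm (W n \<omega>)}) sequentially" if "a < 0" for a
    using that by (simp add: less_le_trans[OF _ measure_nonneg])
  fix \<epsilon> :: real assume "0 < \<epsilon>"
  then obtain K where K: "0 \<le> K" "(\<integral>v. min 1 (max 0 (norm v - K)) \<partial>\<mu>) < \<epsilon>"
    using ex_ramp_integral_less[OF \<mu>] by blast
  define h where "h v = min 1 (max 0 (norm v - K))" for v :: 'b
  have hm: "h \<in> borel_measurable borel"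
    unfolding h_def by (intro borel_measurable_continuous_onI continuous_intros)
  have rW: "(\<lambda>\<omega>. r n *\<^sub>R W n \<omega>) \<in> borel_measurable M" for n using W by measurable
  have "continuous_on UNIV h" "bounded (range h)"
    unfolding h_def bounded_iff by (auto intro!: continuous_intros exI[of _ 1])
  then have "(\<lambda>n. integral\<^sup>L (distr M borel (\<lambda>\<omega>. r n *\<^sub>R W n \<omega>)) h) \<longlonglongrightarrow> integral\<^sup>L \<mu> h"
    using conv unfolding conv_distr_def by blast
  then have lim: "(\<lambda>n. \<integral>\<omega>. h (r n *\<^sub>R W n \<omega>) \<partial>M) \<longlonglongrightarrow> integral\<^sup>L \<mu> h"
    using integral_distr[OF rW hm] by simp
  have "integral\<^sup>L \<mu> h < \<epsilon>" using K(2) unfolding h_def[abs_def] .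
  with lim have "eventually (\<lambda>n. (\<integral>\<omega>. h (r n *\<^sub>R W n \<omega>) \<partial>M) < \<epsilon>) sequentially"
    by (rule order_tendstoD(2))
  moreover have "eventually (\<lambda>n. (K + 1) / \<delta> \<le> r n) sequentially"
    using r by (simp add: filterlim_at_top)
  ultimately show "eventually (\<lambda>n. measure M {\<omega> \<in> space M. \<delta> \<le> norm (W n \<omega>)} < \<epsilon>) sequentially"
  proof eventually_elim
    case (elim n)
    have "1 \<le> h (r n *\<^sub>R W n \<omega>)" if "\<delta> \<le> norm (W n \<omega>)" for \<omega>
    proof -
      have "K + 1 = (K + 1) / \<delta> * \<delta>" using \<delta> by simp
      also have "\<dots> \<le> r n * norm (W n \<omega>)"
        using elim(2) that \<delta> K(1) by (intro mult_mono) (auto intro: order_trans[OF _ elim(2)])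
      finally show ?thesis
        using mult_right_mono[OF abs_ge_self[of "r n"] norm_ge_zero[of "W n \<omega>"]] by (auto simp: h_def)
    qed
    then have "measure M {\<omega> \<in> space M. \<delta> \<le> norm (W n \<omega>)} \<le> (\<integral>\<omega>. h (r n *\<^sub>R W n \<omega>) \<partial>M)"
      by (intro M.measure_le_expectation measurable_compose[OF rW hm]) (auto simp: h_def)
    then show ?case using elim(1) by linarith
  qed
qed

lemma conv_distr_AE_in_closed:
  fixes G :: "nat \<Rightarrow> 'a \<Rightarrow> 'b::euclidean_space"
  assumes M: "prob_space M" and \<mu>: "prob_space \<mu>" "sets \<mu> = sets borel"
    and conv: "conv_distr (\<lambda>n. distr M borel (G n)) \<mu>" and G: "\<And>n. G n \<in> borel_measurable M"
    and S: "closed S" "S \<noteq> {}"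
    and in_S: "eventually (\<lambda>n. E n \<in> sets M \<and> (\<forall>\<omega>\<in>E n. G n \<omega> \<in> S)) sequentially"
    and E1: "(\<lambda>n. measure M (E n)) \<longlonglongrightarrow> 1"
  shows "AE v in \<mu>. v \<in> S"
proof -
  interpret M: prob_space M by (rule M)
  interpret mu: prob_space \<mu> by (rule \<mu>(1))
  define f :: "'b \<Rightarrow> real" where "f v = max 0 (1 - infdist v S)" for v
  have f01: "0 \<le> f v" "f v \<le> 1" for v using infdist_nonneg[of v S] by (auto simp: f_def)
  have fc: "continuous_on UNIV f" unfolding f_def by (intro continuous_intros)
  have fm: "f \<in> borel_measurable borel" using fc by (rule borel_measurable_continuous_onI)
  have "f \<in> borel_measurable \<mu>" unfolding measurable_cong_sets[OF \<mu>(2) refl] by (rule fm)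
  then have f_int: "integrable \<mu> f" using f01 by (intro mu.integrable_const_bound[where B=1]) auto
  have "bounded (range f)" unfolding bounded_iff using f01 by (intro exI[of _ 1]) auto
  then have "(\<lambda>n. integral\<^sup>L (distr M borel (G n)) f) \<longlonglongrightarrow> integral\<^sup>L \<mu> f"
    using conv fc unfolding conv_distr_def by blast
  then have lim: "(\<lambda>n. \<integral>\<omega>. f (G n \<omega>) \<partial>M) \<longlonglongrightarrow> integral\<^sup>L \<mu> f" using integral_distr[OF G fm] by simp
  have "eventually (\<lambda>n. measure M (E n) \<le> (\<integral>\<omega>. f (G n \<omega>) \<partial>M)) sequentially"
    using in_S
  proof eventually_elim
    case (elim n)
    then show ?case using f01 sets.sets_into_space
      by (intro M.measure_le_expectation measurable_compose[OF G fm]) (auto simp: f_def)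
  qed
  with lim E1 have "1 \<le> integral\<^sup>L \<mu> f" by (intro tendsto_le[OF trivial_limit_sequentially]) auto
  then have "integral\<^sup>L \<mu> (\<lambda>v. 1 - f v) = 0"
    using f_int f01 mu.prob_space integral_mono[OF f_int, of "\<lambda>_. 1"]
    by (simp add: Bochner_Integration.integral_diff)
  then have "AE v in \<mu>. 1 - f v = 0"
    using integral_nonneg_eq_0_iff_AE[of \<mu> "\<lambda>v. 1 - f v"] f_int f01 by simp
  then show ?thesis
  proof (rule AE_mp[OF _ AE_I2], intro impI)
    fix v assume "1 - f v = 0"
    then have "infdist v S = 0" using infdist_nonneg[of v S] by (simp add: f_def max_def split: if_splits)
    then show "v \<in> S" using in_closure_iff_infdist_zero[OF S(2)] S(1) by simp
  qed
qed

lemma conv_distr_continuous_on_closed: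
  fixes G :: "nat \<Rightarrow> 'a \<Rightarrow> 'b::euclidean_space" and D :: "nat \<Rightarrow> 'a \<Rightarrow> 'c::euclidean_space"
  assumes M: "prob_space M" and \<mu>: "prob_space \<mu>" "sets \<mu> = sets borel"
    and conv: "conv_distr (\<lambda>n. distr M borel (G n)) \<mu>"
    and G: "\<And>n. G n \<in> borel_measurable M" and D: "\<And>n. D n \<in> borel_measurable M"
    and S: "closed S" and f: "continuous_on S f" "f \<in> borel_measurable borel"
    and eq: "eventually (\<lambda>n. E n \<in> sets M \<and> (\<forall>\<omega>\<in>E n. G n \<omega> \<in> S \<and> D n \<omega> = f (G n \<omega>))) sequentially"
    and E1: "(\<lambda>n. measure M (E n)) \<longlonglongrightarrow> 1"
  shows "conv_distr (\<lambda>n. distr M borel (D n)) (distr \<mu> borel f)"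
proof -
  have "eventually (\<lambda>n. 0 < measure M (E n)) sequentially" using order_tendstoD(1)[OF E1] by simp
  with eq have "eventually (\<lambda>n. \<exists>\<omega>\<in>E n. G n \<omega> \<in> S) sequentially"
    by eventually_elim (metis all_not_in_conv less_irrefl measure_empty)
  then have "S \<noteq> {}" by (auto simp: eventually_sequentially)
  obtain g where g: "continuous_on UNIV g" "\<And>v. v \<in> S \<Longrightarrow> g v = f v"
    using Dugundji[OF convex_UNIV UNIV_not_empty _ f(1) subset_UNIV] S
    by (metis closed_closedin subtopology_UNIV)
  have gm: "g \<in> borel_measurable borel" using g(1) by (rule borel_measurable_continuous_onI)
  have "conv_distr (\<lambda>n. distr M borel (\<lambda>\<omega>. g (G n \<omega>))) (distr \<mu> borel g)"
    by (rule conv_distr_continuous_map[OF conv G \<mu>(2) g(1)])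
  moreover have "eventually (\<lambda>n. E n \<in> sets M \<and> (\<forall>\<omega>\<in>E n. g (G n \<omega>) = D n \<omega>)) sequentially"
    using eq by eventually_elim (simp add: g(2))
  moreover have gG: "(\<lambda>\<omega>. g (G n \<omega>)) \<in> borel_measurable M" for n using measurable_compose[OF G gm] .
  ultimately have conv_g: "conv_distr (\<lambda>n. distr M borel (D n)) (distr \<mu> borel g)"
    by (intro conv_distr_eventually_eq[OF M _ gG D _ E1])
  have "eventually (\<lambda>n. E n \<in> sets M \<and> (\<forall>\<omega>\<in>E n. G n \<omega> \<in> S)) sequentially"
    using eq by (rule eventually_mono) blast
  then have "AE v in \<mu>. v \<in> S" by (rule conv_distr_AE_in_closed[OF M \<mu> conv G S \<open>S \<noteq> {}\<close> _ E1])
  then have "AE v in \<mu>. g v = f v" by (rule AE_mp) (auto intro!: AE_I2 g(2))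
  moreover have "g \<in> borel_measurable \<mu>" "f \<in> borel_measurable \<mu>"
    using gm f(2) unfolding measurable_cong_sets[OF \<mu>(2) refl] .
  ultimately have "distr \<mu> borel g = distr \<mu> borel f" by (intro distr_cong_AE) auto
  then show ?thesis using conv_g by simp
qed

lemma prob_inter_norm_less_tendsto_1:
  fixes W :: "nat \<Rightarrow> 'a \<Rightarrow> 'b::euclidean_space"
  assumes M: "prob_space M" and \<mu>: "prob_space \<mu>" "sets \<mu> = sets borel"
    and conv: "conv_distr (\<lambda>n. distr M borel (\<lambda>\<omega>. r n *\<^sub>R W n \<omega>)) \<mu>"
    and W: "\<And>n. W n \<in> borel_measurable M"
    and r: "filterlim r at_top sequentially" and \<delta>: "0 < \<delta>"
    and \<Omega>: "(\<lambda>n. measure M (\<Omega> n)) \<longlonglongrightarrow> 1"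
  shows "eventually (\<lambda>n. {\<omega> \<in> \<Omega> n. norm (W n \<omega>) < \<delta>} \<in> sets M) sequentially"
    and "(\<lambda>n. measure M {\<omega> \<in> \<Omega> n. norm (W n \<omega>) < \<delta>}) \<longlonglongrightarrow> 1"
proof -
  interpret prob_space M by (rule M)
  define T where "T n = {\<omega> \<in> space M. \<delta> \<le> norm (W n \<omega>)}" for n
  have T: "T n \<in> events" for n unfolding T_def using W by measurable
  \<comment> \<open>non-measurable sets have measure \<open>0\<close>, so \<open>\<Omega> n\<close> is eventually measurable\<close>
  have "eventually (\<lambda>n. \<Omega> n \<in> events) sequentially"
    using order_tendstoD(1)[OF \<Omega>, of 0] by (rule eventually_mono) (auto intro: ccontr simp: measure_notin_sets)
  then have ev: "eventually (\<lambda>n. \<Omega> n \<in> events \<and> {\<omega> \<in> \<Omega> n. norm (W n \<omega>) < \<delta>} = \<Omega> n - T n) sequentially"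
    by (rule eventually_mono) (auto simp: T_def dest: sets.sets_into_space)
  then show "eventually (\<lambda>n. {\<omega> \<in> \<Omega> n. norm (W n \<omega>) < \<delta>} \<in> sets M) sequentially"
    by (rule eventually_mono) (auto intro: T)
  have "(\<lambda>n. measure M (\<Omega> n) - measure M (T n)) \<longlonglongrightarrow> 1 - 0"
    using \<Omega> conv_distr_scaled_imp_prob_tendsto_0[OF M \<mu> conv W r \<delta>] unfolding T_def by (rule tendsto_diff)
  then have lim: "(\<lambda>n. measure M (\<Omega> n) - measure M (T n)) \<longlonglongrightarrow> 1" by simp
  have lower: "eventually (\<lambda>n. measure M (\<Omega> n) - measure M (T n) \<le> measure M {\<omega> \<in> \<Omega> n. norm (W n \<omega>) < \<delta>}) sequentially"
    using ev
  proof eventually_elim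
    case (elim n)
    have "measure M (\<Omega> n) \<le> measure M ((\<Omega> n - T n) \<union> T n)" using elim T by (intro finite_measure_mono) auto
    also have "\<dots> \<le> measure M (\<Omega> n - T n) + measure M (T n)" using elim T by (intro measure_subadditive) auto
    finally show ?case using elim by simp
  qed
  have upper: "eventually (\<lambda>n. measure M {\<omega> \<in> \<Omega> n. norm (W n \<omega>) < \<delta>} \<le> 1) sequentially"
    by (simp add: prob_le_1)
  show "(\<lambda>n. measure M {\<omega> \<in> \<Omega> n. norm (W n \<omega>) < \<delta>}) \<longlonglongrightarrow> 1"
    by (rule tendsto_sandwich[OF lower upper lim tendsto_const])
qed

context lp_perturbation
begin

lemma conv_distr_scaled_optimal:
  fixes bs :: "nat \<Rightarrow> 'a \<Rightarrow> real^'m" and xs :: "nat \<Rightarrow> 'a \<Rightarrow> real^'d"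
  assumes M: "prob_space M" and \<mu>: "prob_space \<mu>" "sets \<mu> = sets borel"
    and r: "filterlim r at_top sequentially"
    and bs: "\<And>n. bs n \<in> borel_measurable M"
    and conv: "conv_distr (\<lambda>n. distr M borel (\<lambda>\<omega>. r n *\<^sub>R (bs n \<omega> - b))) \<mu>"
    and feasible: "(\<lambda>n. measure M {\<omega> \<in> space M. \<exists>x. lp_optimal A c (bs n \<omega>) x}) \<longlonglongrightarrow> 1"
    and xs: "\<And>n. xs n \<in> borel_measurable M"
    and xs_opt: "\<And>n \<omega>. \<omega> \<in> space M \<Longrightarrow> (\<exists>x. lp_optimal A c (bs n \<omega>) x) \<Longrightarrow> lp_optimal A c (bs n \<omega>) (xs n \<omega>)"
  shows "conv_distr (\<lambda>n. distr M borel (\<lambda>\<omega>. r n *\<^sub>R (xs n \<omega> - xstar))) (distr \<mu> borel (limit_map A c b Is))"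
proof -
  obtain \<delta> where "0 < \<delta>" and local: "\<And>w y t. norm w < \<delta> \<Longrightarrow> lp_optimal A c (b + w) y \<Longrightarrow> 0 \<le> t \<Longrightarrow>
      t *\<^sub>R w \<in> (\<Union>I\<in>set Is. Hcone A c b I) \<and> t *\<^sub>R (y - xstar) = limit_map A c b Is (t *\<^sub>R w)"
    using eventually_scaled_optimal_eq_limit_map unfolding eventually_nhds_metric dist_norm by auto
  define E where "E n = {\<omega> \<in> {\<omega> \<in> space M. \<exists>x. lp_optimal A c (bs n \<omega>) x}. norm (bs n \<omega> - b) < \<delta>}" for n
  have W: "(\<lambda>\<omega>. bs n \<omega> - b) \<in> borel_measurable M" for n using bs by measurable
  have E: "eventually (\<lambda>n. E n \<in> sets M) sequentially" "(\<lambda>n. measure M (E n)) \<longlonglongrightarrow> 1"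
    using prob_inter_norm_less_tendsto_1[OF M \<mu> conv W r \<open>0 < \<delta>\<close> feasible] unfolding E_def by auto
  have eq: "eventually (\<lambda>n. E n \<in> sets M \<and> (\<forall>\<omega>\<in>E n. r n *\<^sub>R (bs n \<omega> - b) \<in> (\<Union>I\<in>set Is. Hcone A c b I)
      \<and> r n *\<^sub>R (xs n \<omega> - xstar) = limit_map A c b Is (r n *\<^sub>R (bs n \<omega> - b)))) sequentially"
    using E(1) eventually_ge_at_top[of 0, THEN filterlim_iff[THEN iffD1, OF r, rule_format]]
  proof eventually_elim
    case (elim n)
    have "norm (bs n \<omega> - b) < \<delta>" "lp_optimal A c (b + (bs n \<omega> - b)) (xs n \<omega>)" if "\<omega> \<in> E n" for \<omega>
      using that xs_opt by (auto simp: E_def)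
    then show ?case using elim local by blast
  qed
  show ?thesis
  proof (rule conv_distr_continuous_on_closed[OF M \<mu> conv _ _ _ continuous_on_limit_map _ eq E(2)])
    show "closed (\<Union>I\<in>set Is. Hcone A c b I)" by (rule closed_UN) (auto intro: closed_Hcone Is_basis)
    show "limit_map A c b Is \<in> borel_measurable borel" using Is_basis by (intro borel_measurable_limit_map) auto
    show "(\<lambda>\<omega>. r n *\<^sub>R (bs n \<omega> - b)) \<in> borel_measurable M"
      "(\<lambda>\<omega>. r n *\<^sub>R (xs n \<omega> - xstar)) \<in> borel_measurable M" for n
      using bs xs by measurable
  qed
qed

lemma distr_limit_map_simple_eq:
  assumes "sets \<mu> = sets borel" "absolutely_continuous lborel \<mu>"
  shows "distr \<mu> borel (limit_map_simple A c b Is) = distr \<mu> borel (limit_map A c b Is)"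
proof -
  have "limit_map_simple A c b Is \<in> borel_measurable \<mu>" "limit_map A c b Is \<in> borel_measurable \<mu>"
    unfolding measurable_cong_sets[OF assms(1) refl] using Is_basis
    by (auto intro!: borel_measurable_limit_map_simple borel_measurable_limit_map)
  then show ?thesis using AE_limit_map_simple_eq[OF assms(2)] by (intro distr_cong_AE) auto
qed

end

theorem theorem3p2:
  fixes A :: "real^'d^('m::{finite,linorder})"
    and b :: "real^('m::{finite,linorder})" and c :: "real^'d"
    and Is :: "'d set list"
    and M :: "'a measure"
    and r :: "nat \<Rightarrow> real"
    and m0 :: nat
    and bs :: "nat \<Rightarrow> 'a \<Rightarrow> real^('m::{finite,linorder})"
    and xs :: "nat \<Rightarrow> 'a \<Rightarrow> real^'d"
    and \<mu> :: "(real^('m::{finite,linorder})) measure"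
  assumes full_rank: "rank A = CARD(('m::{finite,linorder}))"
    and m_le_d: "CARD(('m::{finite,linorder})) \<le> CARD('d)"
    and enum: "distinct Is"
      "set Is = {I. dual_feasible_basis A c I \<and> (\<forall>i. 0 \<le> basic_sol A I b $ i)}"
    and A2: "\<exists>!x. lp_optimal A c b x"
    and A3: "distinct (map (dual_sol A c) Is)"
    and M: "prob_space M"
    and r: "filterlim r at_top sequentially"
    and m0: "1 \<le> m0" "m0 \<le> CARD(('m::{finite,linorder}))"
    and bs_meas: "\<And>n. bs n \<in> borel_measurable M"
    and bs_last: "\<And>n \<omega> i. i \<notin> first_coords m0 \<Longrightarrow> bs n \<omega> $ i = b $ i"
    and G_law: "prob_space \<mu>" "sets \<mu> = sets borel"
    and B1_conv: "conv_distr (\<lambda>n. distr M borel (\<lambda>\<omega>. r n *\<^sub>R (bs n \<omega> - b))) \<mu>"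
    and B1_zero: "AE v in \<mu>. \<forall>i. i \<notin> first_coords m0 \<longrightarrow> v $ i = 0"
    and B1_ac: "absolutely_continuous (PiM (first_coords m0) (\<lambda>_. lborel))
                  (distr \<mu> (PiM (first_coords m0) (\<lambda>_. lborel))
                     (\<lambda>v. restrict (\<lambda>i. v $ i) (first_coords m0)))"
    and B2: "(\<lambda>n. measure M {\<omega> \<in> space M. \<exists>x. lp_optimal A c (bs n \<omega>) x}) \<longlonglongrightarrow> 1"
    and xs_meas: "\<And>n. xs n \<in> borel_measurable M"
    and xs_opt: "\<And>n \<omega>. \<omega> \<in> space M \<Longrightarrow> (\<exists>x. lp_optimal A c (bs n \<omega>) x) \<Longrightarrow>
                   lp_optimal A c (bs n \<omega>) (xs n \<omega>)"
  shows "conv_distr (\<lambda>n. distr M borel (\<lambda>\<omega>. r n *\<^sub>R (xs n \<omega> - lp_xstar A c b)))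
           (distr \<mu> borel (limit_map A c b Is))
         \<and> (absolutely_continuous lborel \<mu> \<longrightarrow>
            conv_distr (\<lambda>n. distr M borel (\<lambda>\<omega>. r n *\<^sub>R (xs n \<omega> - lp_xstar A c b)))
              (distr \<mu> borel (limit_map_simple A c b Is)))"
proof -
  interpret lp: lp_perturbation A b c Is
    using full_rank enum(2) A2 A3 by unfold_locales (simp_all add: full_rank_surjective)
  have "conv_distr (\<lambda>n. distr M borel (\<lambda>\<omega>. r n *\<^sub>R (xs n \<omega> - lp_xstar A c b)))
      (distr \<mu> borel (limit_map A c b Is))"
    by (rule lp.conv_distr_scaled_optimal[OF M G_law r bs_meas B1_conv B2 xs_meas xs_opt])
  then show ?thesis using lp.distr_limit_map_simple_eq[OF G_law(2)] by simp
qed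

end
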